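(* Let $\mathcal V$ be a descent category, $k$ a natural number, $T$ a finite simplicial set and $S\hookrightarrow T$ an $m$-expansion. (i) If $X$ is a $k$-groupoid, then $\mathrm{Map}(T,X)\to\mathrm{Map}(S,X)$ is a cover, and an isomorphism if $m>k$. (ii) If $f:X\to Y$ is a fibration of $k$-groupoids, then $\mathrm{Map}(T,X)\to\mathrm{Map}(S\hookrightarrow T,f)$ is a cover, and an isomorphism if $m>k$.
   Context: A descent category is a small category $\mathcal V$ with a subcategory of morphisms called covers such that: $\mathcal V$ has finite limits; pullbacks of covers are covers; if $f$ and $g\circ f$ are covers then $g$ is a cover. A simplicial space is a simplicial object in $\mathcal V$; for a finite simplicial set $T$, $\mathrm{Map}(T,X)$ is the finite limit representing simplicial maps $T\to X$; $\mathrm{Map}(S\hookrightarrow T,f)=\mathrm{Map}(S,X)\times_{\mathrm{Map}(S,Y)}\mathrm{Map}(T,Y)$. $\Lambda^n_i=\bigcup_{j\ne i}\partial_j\Delta^n$. A $k$-groupoid is a simplicial space with $X_n\to\mathrm{Map}(\Lambda^n_i,X)$ a cover for $n>0$, $0\le i\le n$, and an isomorphism for $n>k$. A fibration is a morphism $f$ with $X_n\to\mathrm{Map}(\Lambda^n_i\hookrightarrow\Delta^n,f)$ a cover for $n>0$, $0\le i\le n$. For $m>0$, $S\hookrightarrow T$ is an $m$-expansion if there is a filtration $S=F_{-1}T\subset F_0T\subset\cdots$ with $T=\bigcup_\ell F_\ell T$, a weakly monotone sequence $n_\ell\ge m$, indices $0\le i_\ell\le n_\ell$, and maps making each $F_\ell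 T$ the pushout of $F_{\ell-1}T\leftarrow\Lambda^{n_\ell}_{i_\ell}\hookrightarrow\Delta^{n_\ell}$. *)

theory Defs
  imports Main
begin

record ('o, 'm) category =
  Obj :: "'o set"
  Mor :: "'m set"
  Dom :: "'m \<Rightarrow> 'o"
  Cod :: "'m \<Rightarrow> 'o"
  Comp :: "'m \<Rightarrow> 'm \<Rightarrow> 'm"   (* Comp C g f = g o f *)
  Idm :: "'o \<Rightarrow> 'm"

definition hom :: "('o, 'm, 'x) category_scheme \<Rightarrow> 'o \<Rightarrow> 'o \<Rightarrow> 'm set" where
  "hom C a b = {f \<in> Mor C. Dom C f = a \<and> Cod C f = b}"

definition is_category :: "('o, 'm, 'x) category_scheme \<Rightarrow> bool" where
  "is_category C \<longleftrightarrow>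
     (\<forall>f \<in> Mor C. Dom C f \<in> Obj C \<and> Cod C f \<in> Obj C) \<and>
     (\<forall>a \<in> Obj C. Idm C a \<in> hom C a a) \<and>
     (\<forall>f \<in> Mor C. \<forall>g \<in> Mor C. Cod C f = Dom C g \<longrightarrow>
         Comp C g f \<in> hom C (Dom C f) (Cod C g)) \<and>
     (\<forall>f \<in> Mor C. Comp C f (Idm C (Dom C f)) = f \<and> Comp C (Idm C (Cod C f)) f = f) \<and>
     (\<forall>f \<in> Mor C. \<forall>g \<in> Mor C. \<forall>h \<in> Mor C.
         Cod C f = Dom C g \<and> Cod C g = Dom C h \<longrightarrow>
         Comp C h (Comp C g f) = Comp C (Comp C h g) f)"

definition is_iso :: "('o, 'm, 'x) category_scheme \<Rightarrow> 'm \<Rightarrow> bool" where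
  "is_iso C f \<longleftrightarrow> f \<in> Mor C \<and>
     (\<exists>g \<in> hom C (Cod C f) (Dom C f).
        Comp C g f = Idm C (Dom C f) \<and> Comp C f g = Idm C (Cod C f))"

text \<open>Functors out of a (finite) index category J (with objects and morphisms coded by nat).\<close>

definition is_functor ::
  "(nat, nat) category \<Rightarrow> ('o, 'm, 'x) category_scheme \<Rightarrow> (nat \<Rightarrow> 'o) \<Rightarrow> (nat \<Rightarrow> 'm) \<Rightarrow> bool" where
  "is_functor J C Do Dm \<longleftrightarrow>
     (\<forall>j \<in> Obj J. Do j \<in> Obj C) \<and>
     (\<forall>u \<in> Mor J. Dm u \<in> hom C (Do (Dom J u)) (Do (Cod J u))) \<and>
     (\<forall>j \<in> Obj J. Dm (Idm J j) = Idm C (Do j)) \<and>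
     (\<forall>u \<in> Mor J. \<forall>v \<in> Mor J. Cod J u = Dom J v \<longrightarrow> Dm (Comp J v u) = Comp C (Dm v) (Dm u))"

definition is_diag_cone ::
  "(nat, nat) category \<Rightarrow> ('o, 'm, 'x) category_scheme \<Rightarrow> (nat \<Rightarrow> 'o) \<Rightarrow> (nat \<Rightarrow> 'm)
     \<Rightarrow> 'o \<Rightarrow> (nat \<Rightarrow> 'm) \<Rightarrow> bool" where
  "is_diag_cone J C Do Dm L lam \<longleftrightarrow> L \<in> Obj C \<and>
     (\<forall>j \<in> Obj J. lam j \<in> hom C L (Do j)) \<and>
     (\<forall>u \<in> Mor J. Comp C (Dm u) (lam (Dom J u)) = lam (Cod J u))"

definition is_diag_limit ::
  "(nat, nat) category \<Rightarrow> ('o, 'm, 'x) category_scheme \<Rightarrow> (nat \<Rightarrow> 'o) \<Rightarrow> (nat \<Rightarrow> 'm)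
     \<Rightarrow> 'o \<Rightarrow> (nat \<Rightarrow> 'm) \<Rightarrow> bool" where
  "is_diag_limit J C Do Dm L lam \<longleftrightarrow> is_diag_cone J C Do Dm L lam \<and>
     (\<forall>U mu. is_diag_cone J C Do Dm U mu \<longrightarrow>
        (\<exists>!v. v \<in> hom C U L \<and> (\<forall>j \<in> Obj J. Comp C (lam j) v = mu j)))"

definition has_finite_limits :: "('o, 'm, 'x) category_scheme \<Rightarrow> bool" where
  "has_finite_limits C \<longleftrightarrow>
     (\<forall>(J :: (nat, nat) category) Do Dm.
        is_category J \<and> finite (Obj J) \<and> finite (Mor J) \<and> is_functor J C Do Dm \<longrightarrow>
        (\<exists>L lam. is_diag_limit J C Do Dm L lam))"

definition is_pullback ::
  "('o, 'm, 'x) category_scheme \<Rightarrow> 'm \<Rightarrow> 'm \<Rightarrow> 'o \<Rightarrow> 'm \<Rightarrow> 'm \<Rightarrow> bool" where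
  "is_pullback C f g P p1 p2 \<longleftrightarrow>
     f \<in> Mor C \<and> g \<in> Mor C \<and> Cod C f = Cod C g \<and> P \<in> Obj C \<and>
     p1 \<in> hom C P (Dom C f) \<and> p2 \<in> hom C P (Dom C g) \<and>
     Comp C f p1 = Comp C g p2 \<and>
     (\<forall>Q q1 q2. Q \<in> Obj C \<and> q1 \<in> hom C Q (Dom C f) \<and> q2 \<in> hom C Q (Dom C g) \<and>
        Comp C f q1 = Comp C g q2 \<longrightarrow>
        (\<exists>!v. v \<in> hom C Q P \<and> Comp C p1 v = q1 \<and> Comp C p2 v = q2))"

definition descent_category :: "('o, 'm, 'x) category_scheme \<Rightarrow> 'm set \<Rightarrow> bool" where
  "descent_category C cov \<longleftrightarrow>
     is_category C \<and> has_finite_limits C \<and>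
     cov \<subseteq> Mor C \<and>
     (\<forall>a \<in> Obj C. Idm C a \<in> cov) \<and>
     (\<forall>f \<in> cov. \<forall>g \<in> cov. Cod C f = Dom C g \<longrightarrow> Comp C g f \<in> cov) \<and>
     (\<forall>f g P p1 p2. f \<in> cov \<and> is_pullback C f g P p1 p2 \<longrightarrow> p2 \<in> cov) \<and>
     (\<forall>f \<in> Mor C. \<forall>g \<in> Mor C. Cod C f = Dom C g \<and> f \<in> cov \<and> Comp C g f \<in> cov \<longrightarrow> g \<in> cov)"

text \<open>A monotone map [m] \<rightarrow> [n] is coded as the list of its values (length m+1, sorted, entries \<le> n).\<close>

definition simp_op :: "nat \<Rightarrow> nat \<Rightarrow> nat list \<Rightarrow> bool" where
  "simp_op m n \<theta> \<longleftrightarrow> length \<theta> = Suc m \<and> sorted \<theta> \<and> (\<forall>j \<in> set \<theta>. j \<le> n)"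

text \<open>Composition: for \<theta> : [m] \<rightarrow> [n] and \<phi> : [l] \<rightarrow> [m], \<theta> o \<phi> : [l] \<rightarrow> [n].\<close>

definition op_comp :: "nat list \<Rightarrow> nat list \<Rightarrow> nat list" where
  "op_comp \<theta> \<phi> = map (\<lambda>j. \<theta> ! j) \<phi>"

record 'a sset =
  Simp :: "nat \<Rightarrow> 'a set"
  Act :: "nat \<Rightarrow> nat list \<Rightarrow> 'a \<Rightarrow> 'a"   (* Act T n \<theta> : T_n \<rightarrow> T_m for \<theta> : [m] \<rightarrow> [n] *)

definition is_sset :: "'a sset \<Rightarrow> bool" where
  "is_sset T \<longleftrightarrow>
     (\<forall>n m \<theta> x. simp_op m n \<theta> \<and> x \<in> Simp T n \<longrightarrow> Act T n \<theta> x \<in> Simp T m) \<and>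
     (\<forall>n x. x \<in> Simp T n \<longrightarrow> Act T n [0..<Suc n] x = x) \<and>
     (\<forall>l m n \<theta> \<phi> x. simp_op m n \<theta> \<and> simp_op l m \<phi> \<and> x \<in> Simp T n \<longrightarrow>
        Act T m \<phi> (Act T n \<theta> x) = Act T n (op_comp \<theta> \<phi>) x)"

definition nondegenerate :: "'a sset \<Rightarrow> nat \<Rightarrow> 'a \<Rightarrow> bool" where
  "nondegenerate T n x \<longleftrightarrow> x \<in> Simp T n \<and>
     \<not> (\<exists>k \<sigma> y. k < n \<and> simp_op n k \<sigma> \<and> set \<sigma> = {0..k} \<and> y \<in> Simp T k \<and> x = Act T k \<sigma> y)"

definition finite_sset :: "'a sset \<Rightarrow> bool" where
  "finite_sset T \<longleftrightarrow> is_sset T \<and> finite {(n, x). nondegenerate T n x}"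

text \<open>Simplicial subsets (the monomorphism S \<hookrightarrow> T is taken to be the inclusion of a subcomplex).\<close>

definition is_subcomplex :: "'a sset \<Rightarrow> (nat \<Rightarrow> 'a set) \<Rightarrow> bool" where
  "is_subcomplex T S \<longleftrightarrow> (\<forall>n. S n \<subseteq> Simp T n) \<and>
     (\<forall>n m \<theta> x. simp_op m n \<theta> \<and> x \<in> S n \<longrightarrow> Act T n \<theta> x \<in> S m)"

abbreviation subsset :: "'a sset \<Rightarrow> (nat \<Rightarrow> 'a set) \<Rightarrow> 'a sset" where
  "subsset T S \<equiv> T\<lparr>Simp := S\<rparr>"

definition Delta :: "nat \<Rightarrow> nat list sset" where
  "Delta n = \<lparr>Simp = (\<lambda>m. {\<theta>. simp_op m n \<theta>}), Act = (\<lambda>k \<phi> xs. op_comp xs \<phi>)\<rparr>"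

text \<open>\<Lambda>^n_i = union of the faces \<partial>_j \<Delta>^n, j \<noteq> i: simplices missing some vertex j \<noteq> i.\<close>

definition horn :: "nat \<Rightarrow> nat \<Rightarrow> nat \<Rightarrow> nat list set" where
  "horn n i m = {\<theta>. simp_op m n \<theta> \<and> (\<exists>j \<le> n. j \<noteq> i \<and> j \<notin> set \<theta>)}"

text \<open>F' (a subcomplex of T) is the pushout of F \<leftarrow> \<Lambda>^n_i \<hookrightarrow> \<Delta>^n along the map
  \<Delta>^n \<rightarrow> T classified by the n-simplex x, with F \<hookrightarrow> F' the inclusion.
  Pushouts of simplicial sets are computed levelwise; since \<Lambda>^n_i \<hookrightarrow> \<Delta>^n is injective
  this means: x maps the horn into F, F'_m = F_m \<union> x(\<Delta>^n_m), and x is injective on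
  \<Delta>^n_m - \<Lambda>^n_i_m with image disjoint from F_m.\<close>

definition horn_pushout ::
  "'a sset \<Rightarrow> (nat \<Rightarrow> 'a set) \<Rightarrow> (nat \<Rightarrow> 'a set) \<Rightarrow> nat \<Rightarrow> nat \<Rightarrow> 'a \<Rightarrow> bool" where
  "horn_pushout T F F' n i x \<longleftrightarrow> x \<in> Simp T n \<and>
     (\<forall>m. \<forall>\<theta> \<in> horn n i m. Act T n \<theta> x \<in> F m) \<and>
     (\<forall>m. F' m = F m \<union> (\<lambda>\<theta>. Act T n \<theta> x) ` {\<theta>. simp_op m n \<theta>}) \<and>
     (\<forall>m. inj_on (\<lambda>\<theta>. Act T n \<theta> x) ({\<theta>. simp_op m n \<theta>} - horn n i m)) \<and>
     (\<forall>m. (\<lambda>\<theta>. Act T n \<theta> x) ` ({\<theta>. simp_op m n \<theta>} - horn n i m) \<inter> F m = {})"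

text \<open>m-expansion: F_{-1} = S is coded as F 0, F_l as F (l+1); the filtration is finite
  (for finite T it necessarily is), ending in T.\<close>

definition m_expansion :: "'a sset \<Rightarrow> nat \<Rightarrow> (nat \<Rightarrow> 'a set) \<Rightarrow> bool" where
  "m_expansion T m S \<longleftrightarrow> 0 < m \<and> is_subcomplex T S \<and>
     (\<exists>L (F :: nat \<Rightarrow> nat \<Rightarrow> 'a set) (nn :: nat \<Rightarrow> nat) (ii :: nat \<Rightarrow> nat) (xs :: nat \<Rightarrow> 'a).
        F 0 = S \<and> F L = Simp T \<and>
        (\<forall>l \<le> L. is_subcomplex T (F l)) \<and>
        (\<forall>l < L. m \<le> nn l \<and> ii l \<le> nn l \<and> (\<forall>l'. l \<le> l' \<and> l' < L \<longrightarrow> nn l \<le> nn l') \<and>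
                 horn_pushout T (F l) (F (Suc l)) (nn l) (ii l) (xs l)))"

record ('o, 'm) sobj =
  Ob :: "nat \<Rightarrow> 'o"
  Opm :: "nat \<Rightarrow> nat list \<Rightarrow> 'm"          (* Opm X n \<theta> : X_n \<rightarrow> X_m for \<theta> : [m] \<rightarrow> [n] *)

definition is_sobj :: "('o, 'm, 'x) category_scheme \<Rightarrow> ('o, 'm) sobj \<Rightarrow> bool" where
  "is_sobj C X \<longleftrightarrow>
     (\<forall>n. Ob X n \<in> Obj C) \<and>
     (\<forall>n m \<theta>. simp_op m n \<theta> \<longrightarrow> Opm X n \<theta> \<in> hom C (Ob X n) (Ob X m)) \<and>
     (\<forall>n. Opm X n [0..<Suc n] = Idm C (Ob X n)) \<and>
     (\<forall>l m n \<theta> \<phi>. simp_op m n \<theta> \<and> simp_op l m \<phi> \<longrightarrow>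
        Comp C (Opm X m \<phi>) (Opm X n \<theta>) = Opm X n (op_comp \<theta> \<phi>))"

definition is_smorph ::
  "('o, 'm, 'x) category_scheme \<Rightarrow> ('o, 'm) sobj \<Rightarrow> ('o, 'm) sobj \<Rightarrow> (nat \<Rightarrow> 'm) \<Rightarrow> bool" where
  "is_smorph C X Y f \<longleftrightarrow> is_sobj C X \<and> is_sobj C Y \<and>
     (\<forall>n. f n \<in> hom C (Ob X n) (Ob Y n)) \<and>
     (\<forall>n m \<theta>. simp_op m n \<theta> \<longrightarrow> Comp C (f m) (Opm X n \<theta>) = Comp C (Opm Y n \<theta>) (f n))"

text \<open>A cone from U over T with values in X: a simplicial map T \<rightarrow> Hom(U, X_\<bullet>).\<close>

definition is_scone ::
  "('o, 'm, 'x) category_scheme \<Rightarrow> 'a sset \<Rightarrow> ('o, 'm) sobj \<Rightarrow> 'o \<Rightarrow> (nat \<Rightarrow> 'a \<Rightarrow> 'm) \<Rightarrow> bool" where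
  "is_scone C T X U d \<longleftrightarrow> U \<in> Obj C \<and>
     (\<forall>n. \<forall>x \<in> Simp T n. d n x \<in> hom C U (Ob X n)) \<and>
     (\<forall>n m \<theta> x. simp_op m n \<theta> \<and> x \<in> Simp T n \<longrightarrow>
        Comp C (Opm X n \<theta>) (d n x) = d m (Act T n \<theta> x))"

text \<open>(L, c) is Map(T, X): the object representing simplicial maps T \<rightarrow> X.\<close>

definition is_Map ::
  "('o, 'm, 'x) category_scheme \<Rightarrow> 'a sset \<Rightarrow> ('o, 'm) sobj \<Rightarrow> 'o \<Rightarrow> (nat \<Rightarrow> 'a \<Rightarrow> 'm) \<Rightarrow> bool" where
  "is_Map C T X L c \<longleftrightarrow> is_scone C T X L c \<and>
     (\<forall>U d. is_scone C T X U d \<longrightarrow>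
        (\<exists>!u. u \<in> hom C U L \<and> (\<forall>n. \<forall>x \<in> Simp T n. Comp C (c n x) u = d n x)))"

text \<open>u : L_T \<rightarrow> L_S is the restriction map Map(T,X) \<rightarrow> Map(S,X) (S \<subseteq> T).\<close>

definition is_restr ::
  "('o, 'm, 'x) category_scheme \<Rightarrow> (nat \<Rightarrow> 'a set) \<Rightarrow> (nat \<Rightarrow> 'a \<Rightarrow> 'm) \<Rightarrow> (nat \<Rightarrow> 'a \<Rightarrow> 'm) \<Rightarrow> 'm \<Rightarrow> bool" where
  "is_restr C S cT cS u \<longleftrightarrow> (\<forall>n. \<forall>x \<in> S n. Comp C (cS n x) u = cT n x)"

text \<open>a : L_X \<rightarrow> L_Y is the map Map(S,X) \<rightarrow> Map(S,Y) induced by f : X \<rightarrow> Y.\<close>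

definition is_push ::
  "('o, 'm, 'x) category_scheme \<Rightarrow> (nat \<Rightarrow> 'a set) \<Rightarrow> (nat \<Rightarrow> 'm) \<Rightarrow> (nat \<Rightarrow> 'a \<Rightarrow> 'm) \<Rightarrow> (nat \<Rightarrow> 'a \<Rightarrow> 'm) \<Rightarrow> 'm \<Rightarrow> bool" where
  "is_push C S f cX cY a \<longleftrightarrow> (\<forall>n. \<forall>x \<in> S n. Comp C (cY n x) a = Comp C (f n) (cX n x))"

text \<open>Given Map(T,X) = (LTX,cTX), Map(S,X) = (LSX,cSX), Map(S,Y) = (LSY,cSY), Map(T,Y) = (LTY,cTY),
  the property Q holds of the canonical map Map(T,X) \<rightarrow> Map(S \<hookrightarrow> T, f), where
  Map(S \<hookrightarrow> T, f) = Map(S,X) \<times>_{Map(S,Y)} Map(T,Y) is any chosen pullback.\<close>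

definition relmap_prop ::
  "('o, 'm, 'x) category_scheme \<Rightarrow> ('m \<Rightarrow> bool) \<Rightarrow> 'a sset \<Rightarrow> (nat \<Rightarrow> 'a set) \<Rightarrow> (nat \<Rightarrow> 'm)
    \<Rightarrow> 'o \<Rightarrow> (nat \<Rightarrow> 'a \<Rightarrow> 'm) \<Rightarrow> 'o \<Rightarrow> (nat \<Rightarrow> 'a \<Rightarrow> 'm)
    \<Rightarrow> 'o \<Rightarrow> (nat \<Rightarrow> 'a \<Rightarrow> 'm) \<Rightarrow> 'o \<Rightarrow> (nat \<Rightarrow> 'a \<Rightarrow> 'm) \<Rightarrow> bool" where
  "relmap_prop C Q T S f LTX cTX LSX cSX LSY cSY LTY cTY \<longleftrightarrow>
     (\<forall>a b P p1 p2 u.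
        a \<in> hom C LSX LSY \<and> is_push C S f cSX cSY a \<and>
        b \<in> hom C LTY LSY \<and> is_restr C S cTY cSY b \<and>
        is_pullback C a b P p1 p2 \<and>
        u \<in> hom C LTX P \<and> is_restr C S cTX cSX (Comp C p1 u) \<and>
        is_push C (Simp T) f cTX cTY (Comp C p2 u)
        \<longrightarrow> Q u)"

definition k_groupoid :: "('o, 'm, 'x) category_scheme \<Rightarrow> 'm set \<Rightarrow> nat \<Rightarrow> ('o, 'm) sobj \<Rightarrow> bool" where
  "k_groupoid C cov k X \<longleftrightarrow> is_sobj C X \<and>
     (\<forall>n i L c u. 0 < n \<and> i \<le> n \<and> is_Map C (subsset (Delta n) (horn n i)) X L c \<and>
        u \<in> hom C (Ob X n) L \<and> is_restr C (horn n i) (\<lambda>m \<theta>. Opm X n \<theta>) c u \<longrightarrow>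
        u \<in> cov \<and> (k < n \<longrightarrow> is_iso C u))"

text \<open>Fibration: X_n \<rightarrow> Map(\<Lambda>^n_i \<hookrightarrow> \<Delta>^n, f) = Map(\<Lambda>^n_i,X) \<times>_{Map(\<Lambda>^n_i,Y)} Y_n is a cover.\<close>

definition fibration ::
  "('o, 'm, 'x) category_scheme \<Rightarrow> 'm set \<Rightarrow> ('o, 'm) sobj \<Rightarrow> ('o, 'm) sobj \<Rightarrow> (nat \<Rightarrow> 'm) \<Rightarrow> bool" where
  "fibration C cov X Y f \<longleftrightarrow> is_smorph C X Y f \<and>
     (\<forall>n i LSX cSX LSY cSY. 0 < n \<and> i \<le> n \<and>
        is_Map C (subsset (Delta n) (horn n i)) X LSX cSX \<and>
        is_Map C (subsset (Delta n) (horn n i)) Y LSY cSY \<longrightarrow>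
        relmap_prop C (\<lambda>u. u \<in> cov) (Delta n) (horn n i) f
          (Ob X n) (\<lambda>m \<theta>. Opm X n \<theta>) LSX cSX LSY cSY (Ob Y n) (\<lambda>m \<theta>. Opm Y n \<theta>))"

end

theory Submission
  imports Defs "HOL-Library.Countable"
begin

text \<open>Map(T, X) is obtained from Map(S, X) by attaching the horns of the expansion one at a
  time. Attaching \<Lambda>^n_i \<hookrightarrow> \<Delta>^n along an n-simplex x turns F into F' with
  Map(F', X) = Map(F, X) \<times> X_n, the pullback over Map(\<Lambda>^n_i, X). Hence
  Map(F', X) \<rightarrow> Map(F, X) is a base change of the horn map X_n \<rightarrow> Map(\<Lambda>^n_i, X), which is
  a cover, and an isomorphism when n \<ge> m > k; composing along the filtration gives (i).
  Part (ii) is the same argument for the relative objects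
  Map(F \<hookrightarrow> T, f) = Map(F, X) \<times> Map(T, Y) over Map(F, Y), where each step is a base
  change of X_n \<rightarrow> Map(\<Lambda>^n_i \<hookrightarrow> \<Delta>^n, f), a cover because f is a fibration.\<close>

lemma homD: "f \<in> hom C a b \<Longrightarrow> f \<in> Mor C \<and> Dom C f = a \<and> Cod C f = b"
  by (simp add: hom_def)

lemma cat_comp:
  assumes "is_category C" "f \<in> hom C a b" "g \<in> hom C b c"
  shows "Comp C g f \<in> hom C a c"
  using assms unfolding is_category_def hom_def by auto

lemma cat_obj:
  assumes "is_category C" "f \<in> hom C a b"
  shows "a \<in> Obj C" "b \<in> Obj C"
  using assms unfolding is_category_def hom_def by auto

lemma cat_id:
  assumes "is_category C" "a \<in> Obj C"
  shows "Idm C a \<in> hom C a a"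
  using assms unfolding is_category_def by auto

lemma cat_idl:
  assumes "is_category C" "f \<in> hom C a b"
  shows "Comp C (Idm C b) f = f"
  using assms unfolding is_category_def hom_def by auto

lemma cat_idr:
  assumes "is_category C" "f \<in> hom C a b"
  shows "Comp C f (Idm C a) = f"
  using assms unfolding is_category_def hom_def by auto

lemma cat_assoc:
  assumes "is_category C" "f \<in> hom C a b" "g \<in> hom C b c" "h \<in> hom C c d"
  shows "Comp C h (Comp C g f) = Comp C (Comp C h g) f"
  using assms unfolding is_category_def hom_def by auto

lemma isoE:
  assumes "is_iso C f" "f \<in> hom C a b"
  obtains g where "g \<in> hom C b a" "Comp C g f = Idm C a" "Comp C f g = Idm C b"
  using assms unfolding is_iso_def hom_def by auto

lemma isoI:
  assumes "f \<in> hom C a b" "g \<in> hom C b a" "Comp C g f = Idm C a" "Comp C f g = Idm C b"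
  shows "is_iso C f"
  using assms unfolding is_iso_def hom_def by auto

lemma id_iso: "is_category C \<Longrightarrow> a \<in> Obj C \<Longrightarrow> is_iso C (Idm C a)"
  by (metis cat_id cat_idl isoI)

lemma iso_comp:
  assumes C: "is_category C" and f: "f \<in> hom C a b" and g: "g \<in> hom C b c"
    and "is_iso C f" "is_iso C g"
  shows "is_iso C (Comp C g f)"
proof -
  obtain f' where f': "f' \<in> hom C b a" "Comp C f' f = Idm C a" "Comp C f f' = Idm C b"
    using isoE[OF \<open>is_iso C f\<close> f] .
  obtain g' where g': "g' \<in> hom C c b" "Comp C g' g = Idm C b" "Comp C g g' = Idm C c"
    using isoE[OF \<open>is_iso C g\<close> g] .
  have gf: "Comp C g f \<in> hom C a c" and fg': "Comp C f' g' \<in> hom C c a"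
    using cat_comp[OF C f g] cat_comp[OF C g'(1) f'(1)] .
  have left: "Comp C (Comp C f' g') (Comp C g f) = Idm C a"
    using cat_assoc[OF C gf g'(1) f'(1)] cat_assoc[OF C f g g'(1)] g'(2) cat_idl[OF C f] f'(2)
    by simp
  have right: "Comp C (Comp C g f) (Comp C f' g') = Idm C c"
    using cat_assoc[OF C fg' f g] cat_assoc[OF C g'(1) f'(1) f] f'(3) cat_idl[OF C g'(1)] g'(3)
    by simp
  show ?thesis
    by (rule isoI[OF cat_comp[OF C f g] cat_comp[OF C g'(1) f'(1)] left right])
qed

lemma iso_cancel_left:
  assumes C: "is_category C" and h: "h \<in> hom C a b" and q: "q \<in> hom C b c"
    and "is_iso C q" "is_iso C (Comp C q h)"
  shows "is_iso C h"
proof -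
  obtain q' where q': "q' \<in> hom C c b" "Comp C q' q = Idm C b" "Comp C q q' = Idm C c"
    using isoE[OF \<open>is_iso C q\<close> q] .
  have "is_iso C q'" using isoI[OF q'(1) q q'(3) q'(2)] .
  then have "is_iso C (Comp C q' (Comp C q h))"
    by (rule iso_comp[OF C cat_comp[OF C h q] q'(1) \<open>is_iso C (Comp C q h)\<close>])
  moreover have "Comp C q' (Comp C q h) = h"
    using cat_assoc[OF C h q q'(1)] q'(2) cat_idl[OF C h] by simp
  ultimately show ?thesis by simp
qed

section \<open>Pullbacks\<close>

definition pullback_shape :: "(nat, nat) category" where
  "pullback_shape = \<lparr>Obj = {0,1,2}, Mor = {0,1,2,3,4},
          Dom = (\<lambda>u. if u = 3 then 0 else if u = 4 then 1 else u),
          Cod = (\<lambda>u. if 3 \<le> u then 2 else u),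
          Comp = (\<lambda>v u. if v \<le> 2 then u else v), Idm = (\<lambda>j. j)\<rparr>"

lemma is_category_pullback_shape: "is_category pullback_shape"
  unfolding is_category_def pullback_shape_def hom_def by auto

definition cospan_obj :: "('o, 'm, 'x) category_scheme \<Rightarrow> 'm \<Rightarrow> 'm \<Rightarrow> nat \<Rightarrow> 'o" where
  "cospan_obj C f g j = (if j = 0 then Dom C f else if j = 1 then Dom C g else Cod C f)"

definition cospan_mor :: "('o, 'm, 'x) category_scheme \<Rightarrow> 'm \<Rightarrow> 'm \<Rightarrow> nat \<Rightarrow> 'm" where
  "cospan_mor C f g u = (if u = 3 then f else if u = 4 then g else Idm C (cospan_obj C f g u))"

lemma pullback_shape_simps:
  "u \<in> Mor pullback_shape \<longleftrightarrow> u = 0 \<or> u = 1 \<or> u = 2 \<or> u = 3 \<or> u = 4"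
  "j \<in> Obj pullback_shape \<longleftrightarrow> j = 0 \<or> j = 1 \<or> j = 2"
  "finite (Obj pullback_shape)" "finite (Mor pullback_shape)"
  by (auto simp: pullback_shape_def)

lemma is_functor_cospan:
  assumes C: "is_category C" and f: "f \<in> hom C a c" and g: "g \<in> hom C b c"
  shows "is_functor pullback_shape C (cospan_obj C f g) (cospan_mor C f g)"
proof -
  have D: "Dom C f = a" "Dom C g = b" "Cod C f = c" using f g by (auto simp: hom_def)
  have objs: "a \<in> Obj C" "b \<in> Obj C" "c \<in> Obj C" using cat_obj[OF C f] cat_obj[OF C g] by auto
  note ids = cat_id[OF C objs(1)] cat_id[OF C objs(2)] cat_id[OF C objs(3)]
  show ?thesis
    unfolding is_functor_def
  proof (intro conjI ballI allI impI)
    fix j assume "j \<in> Obj pullback_shape"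
    then show "cospan_obj C f g j \<in> Obj C"
      using objs by (auto simp: pullback_shape_simps cospan_obj_def D)
  next
    fix u assume "u \<in> Mor pullback_shape"
    then show "cospan_mor C f g u \<in> hom C (cospan_obj C f g (Dom pullback_shape u))
        (cospan_obj C f g (Cod pullback_shape u))"
      unfolding pullback_shape_simps
      by (elim disjE) (simp_all add: pullback_shape_def cospan_obj_def cospan_mor_def D f g ids)
  next
    fix j assume "j \<in> Obj pullback_shape"
    then show "cospan_mor C f g (Idm pullback_shape j) = Idm C (cospan_obj C f g j)"
      by (auto simp: pullback_shape_def cospan_mor_def cospan_obj_def)
  next
    fix u v assume "u \<in> Mor pullback_shape" "v \<in> Mor pullback_shape"
      "Cod pullback_shape u = Dom pullback_shape v"
    then show "cospan_mor C f g (Comp pullback_shape v u) =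
        Comp C (cospan_mor C f g v) (cospan_mor C f g u)"
      unfolding pullback_shape_simps
      apply (elim disjE)
      apply (simp_all add: pullback_shape_def cospan_mor_def cospan_obj_def)
      apply (simp_all add: D cat_idl[OF C f] cat_idr[OF C f] cat_idl[OF C g] cat_idr[OF C g]
          cat_idl[OF C ids(1)] cat_idl[OF C ids(2)] cat_idl[OF C ids(3)])
      done
  qed
qed

lemma pullback_of_cospan_limit:
  assumes C: "is_category C" and f: "f \<in> hom C a c" and g: "g \<in> hom C b c"
    and lim: "is_diag_limit pullback_shape C (cospan_obj C f g) (cospan_mor C f g) P lam"
  shows "is_pullback C f g P (lam 0) (lam 1)"
proof -
  have D: "Dom C f = a" "Dom C g = b" "Cod C f = c" "Cod C g = c" using f g by (auto simp: hom_def)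
  have cn: "P \<in> Obj C" "\<forall>j\<in>Obj pullback_shape. lam j \<in> hom C P (cospan_obj C f g j)"
    "\<forall>u\<in>Mor pullback_shape. Comp C (cospan_mor C f g u) (lam (Dom pullback_shape u))
        = lam (Cod pullback_shape u)"
    using lim unfolding is_diag_limit_def is_diag_cone_def by auto
  have cone: "P \<in> Obj C" "lam 0 \<in> hom C P a" "lam 1 \<in> hom C P b"
    "Comp C f (lam 0) = lam 2" "Comp C g (lam 1) = lam 2"
    using cn(1) cn(2)[rule_format, of 0] cn(2)[rule_format, of 1]
      cn(3)[rule_format, of 3] cn(3)[rule_format, of 4]
    by (simp_all add: pullback_shape_simps) (simp_all add: pullback_shape_def cospan_obj_def cospan_mor_def D)
  have univ: "\<exists>!v. v \<in> hom C Q P \<and> Comp C (lam 0) v = q1 \<and> Comp C (lam 1) v = q2"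
    if Q: "Q \<in> Obj C" and q: "q1 \<in> hom C Q a" "q2 \<in> hom C Q b" "Comp C f q1 = Comp C g q2"
    for Q q1 q2
  proof -
    define mu where "mu = (\<lambda>j::nat. if j = 0 then q1 else if j = 1 then q2 else Comp C f q1)"
    have fq: "Comp C f q1 \<in> hom C Q c" using cat_comp[OF C q(1) f] .
    have "is_diag_cone pullback_shape C (cospan_obj C f g) (cospan_mor C f g) Q mu"
      unfolding is_diag_cone_def pullback_shape_simps
      using Q q fq cat_idl[OF C fq] cat_idl[OF C q(1)] cat_idl[OF C q(2)] by (auto simp: pullback_shape_def mu_def cospan_obj_def cospan_mor_def D)
    then obtain v where v: "v \<in> hom C Q P" "\<forall>j\<in>Obj pullback_shape. Comp C (lam j) v = mu j"
      and vu: "\<And>w. w \<in> hom C Q P \<Longrightarrow> \<forall>j\<in>Obj pullback_shape. Comp C (lam j) w = mu j \<Longrightarrow> w = v"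
      using lim unfolding is_diag_limit_def by metis
    show ?thesis
    proof (rule ex1I[of _ v])
      show "v \<in> hom C Q P \<and> Comp C (lam 0) v = q1 \<and> Comp C (lam 1) v = q2"
        using v by (auto simp: pullback_shape_simps mu_def)
    next
      fix w assume w: "w \<in> hom C Q P \<and> Comp C (lam 0) w = q1 \<and> Comp C (lam 1) w = q2"
      then have "Comp C (lam 2) w = Comp C f q1"
        using cone(2,4) cat_assoc[OF C _ cone(2) f, of w Q] by simp
      then have "\<forall>j\<in>Obj pullback_shape. Comp C (lam j) w = mu j"
        unfolding Ball_def pullback_shape_simps mu_def using w by auto
      then show "w = v" using vu w by blast
    qed
  qed
  show ?thesis
    unfolding is_pullback_def
  proof (intro conjI allI impI)
    fix Q q1 q2 assume "Q \<in> Obj C \<and> q1 \<in> hom C Q (Dom C f) \<and> q2 \<in> hom C Q (Dom C g) \<and>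
        Comp C f q1 = Comp C g q2"
    then show "\<exists>!v. v \<in> hom C Q P \<and> Comp C (lam 0) v = q1 \<and> Comp C (lam 1) v = q2"
      using univ D by blast
  qed (use cone homD[OF f] homD[OF g] D in simp_all)
qed

lemma pullback_exists:
  assumes C: "is_category C" and L: "has_finite_limits C"
    and f: "f \<in> hom C a c" and g: "g \<in> hom C b c"
  obtains P p1 p2 where "is_pullback C f g P p1 p2"
proof -
  obtain P lam where "is_diag_limit pullback_shape C (cospan_obj C f g) (cospan_mor C f g) P lam"
    using L is_category_pullback_shape is_functor_cospan[OF C f g] pullback_shape_simps(3,4)
    unfolding has_finite_limits_def by blast
  then show ?thesis using pullback_of_cospan_limit[OF C f g] that by blast
qed

lemma ex1_unique: "\<exists>!x. P x \<Longrightarrow> P a \<Longrightarrow> P b \<Longrightarrow> a = b"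
  by blast

lemma pullbackD:
  assumes "is_pullback C f g P p1 p2"
  shows "P \<in> Obj C" "p1 \<in> hom C P (Dom C f)" "p2 \<in> hom C P (Dom C g)"
    "Comp C f p1 = Comp C g p2"
    "f \<in> hom C (Dom C f) (Cod C f)" "g \<in> hom C (Dom C g) (Cod C f)"
    "\<And>Q q1 q2. Q \<in> Obj C \<Longrightarrow> q1 \<in> hom C Q (Dom C f) \<Longrightarrow> q2 \<in> hom C Q (Dom C g) \<Longrightarrow>
        Comp C f q1 = Comp C g q2 \<Longrightarrow>
        \<exists>!v. v \<in> hom C Q P \<and> Comp C p1 v = q1 \<and> Comp C p2 v = q2"
proof -
  note d = assms[unfolded is_pullback_def]
  show "P \<in> Obj C" "p1 \<in> hom C P (Dom C f)" "p2 \<in> hom C P (Dom C g)"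
    "Comp C f p1 = Comp C g p2"
    using d by simp_all
  have "f \<in> Mor C" "g \<in> Mor C" "Cod C f = Cod C g" using d by simp_all
  then show "f \<in> hom C (Dom C f) (Cod C f)" "g \<in> hom C (Dom C g) (Cod C f)"
    by (simp_all add: hom_def)
  fix Q q1 q2 assume "Q \<in> Obj C" "q1 \<in> hom C Q (Dom C f)" "q2 \<in> hom C Q (Dom C g)"
    "Comp C f q1 = Comp C g q2"
  then show "\<exists>!v. v \<in> hom C Q P \<and> Comp C p1 v = q1 \<and> Comp C p2 v = q2"
    using d[THEN conjunct2, THEN conjunct2, THEN conjunct2, THEN conjunct2, THEN conjunct2,
       THEN conjunct2, THEN conjunct2] by blast
qed

lemma pullbackI:
  assumes "f \<in> Mor C" "g \<in> Mor C" "Cod C f = Cod C g" "P \<in> Obj C"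
    "p1 \<in> hom C P (Dom C f)" "p2 \<in> hom C P (Dom C g)" "Comp C f p1 = Comp C g p2"
    "\<And>Q q1 q2. Q \<in> Obj C \<Longrightarrow> q1 \<in> hom C Q (Dom C f) \<Longrightarrow> q2 \<in> hom C Q (Dom C g) \<Longrightarrow>
        Comp C f q1 = Comp C g q2 \<Longrightarrow>
        \<exists>!v. v \<in> hom C Q P \<and> Comp C p1 v = q1 \<and> Comp C p2 v = q2"
  shows "is_pullback C f g P p1 p2"
  unfolding is_pullback_def using assms by simp

lemma pullback_univ:
  assumes "is_pullback C f g P p1 p2" "q1 \<in> hom C Q (Dom C f)" "q2 \<in> hom C Q (Dom C g)"
    "Comp C f q1 = Comp C g q2" "is_category C"
  obtains v where "v \<in> hom C Q P" "Comp C p1 v = q1" "Comp C p2 v = q2"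
  using pullbackD(7)[OF assms(1) cat_obj(1)[OF assms(5,2)] assms(2-4)] by blast

lemma pullback_uniq:
  assumes C: "is_category C" and pb: "is_pullback C f g P p1 p2"
    and v: "v \<in> hom C Q P" and w: "w \<in> hom C Q P"
    and "Comp C p1 v = Comp C p1 w" "Comp C p2 v = Comp C p2 w"
  shows "v = w"
proof -
  note f = pullbackD(5)[OF pb] and g = pullbackD(6)[OF pb]
  note p = pullbackD(2,3)[OF pb]
  have "Comp C f (Comp C p1 v) = Comp C g (Comp C p2 v)"
    using cat_assoc[OF C v p(1) f] cat_assoc[OF C v p(2) g] pullbackD(4)[OF pb] by simp
  then have "\<exists>!u. u \<in> hom C Q P \<and> Comp C p1 u = Comp C p1 v \<and> Comp C p2 u = Comp C p2 v"
    using pullbackD(7)[OF pb cat_obj(1)[OF C v] cat_comp[OF C v p(1)] cat_comp[OF C v p(2)]] by simp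
  then show ?thesis by (rule ex1_unique) (use v w assms(5,6) in simp_all)
qed

lemma pullback_sym:
  assumes C: "is_category C" and pb: "is_pullback C f g P p1 p2"
  shows "is_pullback C g f P p2 p1"
proof (rule pullbackI)
  show "g \<in> Mor C" "f \<in> Mor C" "Cod C g = Cod C f"
    using homD[OF pullbackD(5)[OF pb]] homD[OF pullbackD(6)[OF pb]] by simp_all
  show "P \<in> Obj C" "p2 \<in> hom C P (Dom C g)" "p1 \<in> hom C P (Dom C f)" "Comp C g p2 = Comp C f p1"
    using pullbackD(1-4)[OF pb] by simp_all
  fix Q q1 q2 assume q: "Q \<in> Obj C" "q1 \<in> hom C Q (Dom C g)" "q2 \<in> hom C Q (Dom C f)"
    "Comp C g q1 = Comp C f q2"
  obtain v where v: "v \<in> hom C Q P" "Comp C p1 v = q2" "Comp C p2 v = q1"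
    using pullback_univ[OF pb q(3,2) q(4)[symmetric] C] .
  show "\<exists>!v. v \<in> hom C Q P \<and> Comp C p2 v = q1 \<and> Comp C p1 v = q2"
  proof (rule ex1I[of _ v])
    fix w assume "w \<in> hom C Q P \<and> Comp C p2 w = q1 \<and> Comp C p1 w = q2"
    then show "w = v" using pullback_uniq[OF C pb _ v(1), of w] v by simp
  qed (use v in simp)
qed

lemma pullback_iso:
  assumes C: "is_category C" and pb: "is_pullback C f g P p1 p2" and fi: "is_iso C f"
  shows "is_iso C p2"
proof -
  note f = pullbackD(5)[OF pb] and g = pullbackD(6)[OF pb]
  note h = pullbackD(1-4)[OF pb]
  obtain f' where f': "f' \<in> hom C (Cod C f) (Dom C f)" "Comp C f' f = Idm C (Dom C f)"
      "Comp C f f' = Idm C (Cod C f)"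
    using isoE[OF fi f] .
  have gD: "Dom C g \<in> Obj C" using cat_obj[OF C g] by simp
  have idg: "Idm C (Dom C g) \<in> hom C (Dom C g) (Dom C g)" using cat_id[OF C gD] .
  have q1: "Comp C f' g \<in> hom C (Dom C g) (Dom C f)" using cat_comp[OF C g f'(1)] .
  have "Comp C f (Comp C f' g) = Comp C g (Idm C (Dom C g))"
    using cat_assoc[OF C g f'(1) f] f'(3) cat_idl[OF C g] cat_idr[OF C g] by simp
  \<comment> \<open>The inverse of p2 is induced by the square with sides f' \<circ> g and the identity.\<close>
  then obtain v where v: "v \<in> hom C (Dom C g) P" "Comp C p1 v = Comp C f' g"
      "Comp C p2 v = Idm C (Dom C g)"
    using pullback_univ[OF pb q1 idg _ C] by blast
  have vp: "Comp C v p2 \<in> hom C P P" using cat_comp[OF C h(3) v(1)] .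
  have "Comp C v p2 = Idm C P"
  proof (rule pullback_uniq[OF C pb vp cat_id[OF C h(1)]])
    have "Comp C p1 (Comp C v p2) = Comp C (Comp C f' g) p2"
      using cat_assoc[OF C h(3) v(1) h(2)] v(2) by simp
    also have "\<dots> = Comp C f' (Comp C g p2)"
      using cat_assoc[OF C h(3) g f'(1)] by simp
    also have "\<dots> = Comp C (Comp C f' f) p1"
      using h(4) cat_assoc[OF C h(2) f f'(1)] by simp
    also have "\<dots> = p1" using f'(2) cat_idl[OF C h(2)] by simp
    finally show "Comp C p1 (Comp C v p2) = Comp C p1 (Idm C P)" using cat_idr[OF C h(2)] by simp
    show "Comp C p2 (Comp C v p2) = Comp C p2 (Idm C P)"
      using cat_assoc[OF C h(3) v(1) h(3)] v(3) cat_idl[OF C h(3)] cat_idr[OF C h(3)] by simp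
  qed
  then show ?thesis using isoI[OF h(3) v(1)] v(3) by blast
qed

section \<open>Covers\<close>

lemma descent_categoryD:
  assumes "descent_category C cov"
  shows "is_category C" "has_finite_limits C" "\<And>a. a \<in> Obj C \<Longrightarrow> Idm C a \<in> cov"
    "\<And>f g a b c. f \<in> cov \<Longrightarrow> g \<in> cov \<Longrightarrow> f \<in> hom C a b \<Longrightarrow> g \<in> hom C b c \<Longrightarrow>
       Comp C g f \<in> cov"
    "\<And>f g P p1 p2. f \<in> cov \<Longrightarrow> is_pullback C f g P p1 p2 \<Longrightarrow> p2 \<in> cov"
proof -
  show "is_category C" using assms unfolding descent_category_def by (elim conjE)
  show "has_finite_limits C" using assms unfolding descent_category_def by (elim conjE)
  have "\<forall>a \<in> Obj C. Idm C a \<in> cov"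
    using assms unfolding descent_category_def by (elim conjE)
  then show "\<And>a. a \<in> Obj C \<Longrightarrow> Idm C a \<in> cov" by blast
  have "\<forall>f\<in>cov. \<forall>g\<in>cov. Cod C f = Dom C g \<longrightarrow> Comp C g f \<in> cov"
    using assms unfolding descent_category_def by (elim conjE)
  then show "\<And>f g a b c. f \<in> cov \<Longrightarrow> g \<in> cov \<Longrightarrow> f \<in> hom C a b \<Longrightarrow> g \<in> hom C b c \<Longrightarrow>
      Comp C g f \<in> cov"
    by (auto simp: hom_def)
  have "\<forall>f g P p1 p2. f \<in> cov \<and> is_pullback C f g P p1 p2 \<longrightarrow> p2 \<in> cov"
    using assms unfolding descent_category_def by (elim conjE)
  then show "\<And>f g P p1 p2. f \<in> cov \<Longrightarrow> is_pullback C f g P p1 p2 \<Longrightarrow> p2 \<in> cov" by blast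
qed

lemma iso_cover:
  assumes D: "descent_category C cov" and w: "w \<in> hom C a b" and iw: "is_iso C w"
  shows "w \<in> cov"
proof -
  have C: "is_category C" using descent_categoryD(1)[OF D] .
  obtain w' where w': "w' \<in> hom C b a" "Comp C w' w = Idm C a" "Comp C w w' = Idm C b"
    using isoE[OF iw w] .
  have b: "b \<in> Obj C" and a: "a \<in> Obj C" using cat_obj[OF C w] by auto
  have ib: "Idm C b \<in> hom C b b" using cat_id[OF C b] .
  \<comment> \<open>An isomorphism onto b is a pullback of the identity of b along itself.\<close>
  have "is_pullback C (Idm C b) (Idm C b) a w w"
  proof (rule pullbackI)
    fix Q q1 q2 assume Q: "Q \<in> Obj C" "q1 \<in> hom C Q (Dom C (Idm C b))"
       "q2 \<in> hom C Q (Dom C (Idm C b))" "Comp C (Idm C b) q1 = Comp C (Idm C b) q2"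
    then have q: "q1 \<in> hom C Q b" "q2 \<in> hom C Q b" using ib by (auto simp: hom_def)
    then have qq: "q1 = q2" using Q cat_idl[OF C q(1)] cat_idl[OF C q(2)] by simp
    have e1: "Comp C w (Comp C w' q1) = q1"
      using cat_assoc[OF C q(1) w'(1) w] w'(3) cat_idl[OF C q(1)] by simp
    show "\<exists>!v. v \<in> hom C Q a \<and> Comp C w v = q1 \<and> Comp C w v = q2"
    proof (rule ex1I[of _ "Comp C w' q1"])
      show "Comp C w' q1 \<in> hom C Q a \<and> Comp C w (Comp C w' q1) = q1 \<and> Comp C w (Comp C w' q1) = q2"
        using cat_comp[OF C q(1) w'(1)] e1 by (simp add: qq[symmetric])
    next
      fix v assume v: "v \<in> hom C Q a \<and> Comp C w v = q1 \<and> Comp C w v = q2"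
      then have vh: "v \<in> hom C Q a" by simp
      have "Comp C w' (Comp C w v) = v"
        using cat_assoc[OF C vh w w'(1)] w'(2) cat_idl[OF C vh] by simp
      then show "v = Comp C w' q1" using v by simp
    qed
  next
    show "Comp C (Idm C b) w = Comp C (Idm C b) w" ..
  qed (use homD[OF ib] w a in simp_all)
  then show ?thesis by (rule descent_categoryD(5)[OF D descent_categoryD(3)[OF D b]])
qed

lemma cover_iso_comp:
  assumes D: "descent_category C cov" and f: "f \<in> hom C a b" and g: "g \<in> hom C b c"
    and "f \<in> cov \<and> (P \<longrightarrow> is_iso C f)" "g \<in> cov \<and> (P \<longrightarrow> is_iso C g)"
  shows "Comp C g f \<in> cov \<and> (P \<longrightarrow> is_iso C (Comp C g f))"
  using assms(4,5) descent_categoryD(4)[OF D _ _ f g] iso_comp[OF descent_categoryD(1)[OF D] f g]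
  by simp

lemma cover_iso_id:
  assumes "descent_category C cov" "a \<in> Obj C"
  shows "Idm C a \<in> cov \<and> (P \<longrightarrow> is_iso C (Idm C a))"
  using descent_categoryD(3)[OF assms] id_iso[OF descent_categoryD(1)[OF assms(1)] assms(2)] by simp

section \<open>Simplicial operators\<close>

lemma simp_op_comp:
  assumes "simp_op m n \<theta>" "simp_op k m \<phi>"
  shows "simp_op k n (op_comp \<theta> \<phi>)"
proof -
  have l: "length \<theta> = Suc m" "length \<phi> = Suc k" "sorted \<theta>" "sorted \<phi>"
    "\<forall>j\<in>set \<theta>. j \<le> n" "\<forall>j\<in>set \<phi>. j \<le> m"
    using assms by (auto simp: simp_op_def)
  have lt: "\<And>j. j < length \<phi> \<Longrightarrow> \<phi> ! j < length \<theta>"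
    using l by (metis le_imp_less_Suc nth_mem)
  have "sorted (map (\<lambda>j. \<theta> ! j) \<phi>)"
    unfolding sorted_iff_nth_mono
  proof (intro allI impI)
    fix i j assume ij: "i \<le> j" "j < length (map ((!) \<theta>) \<phi>)"
    then have "\<phi> ! i \<le> \<phi> ! j" using l(4) by (simp add: sorted_iff_nth_mono)
    then show "map ((!) \<theta>) \<phi> ! i \<le> map ((!) \<theta>) \<phi> ! j"
      using ij lt l(3) by (simp add: sorted_iff_nth_mono)
  qed
  moreover have "\<forall>j\<in>set (map (\<lambda>j. \<theta> ! j) \<phi>). j \<le> n"
  proof
    fix j assume "j \<in> set (map (\<lambda>j. \<theta> ! j) \<phi>)"
    then obtain i where "i < length \<phi>" "j = \<theta> ! (\<phi> ! i)" by (auto simp: in_set_conv_nth)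
    then have "j \<in> set \<theta>" using lt by simp
    then show "j \<le> n" using l(5) by blast
  qed
  ultimately show ?thesis using l unfolding simp_op_def op_comp_def by simp
qed

lemma simp_op_id: "simp_op n n [0..<Suc n]"
  unfolding simp_op_def by (simp del: upt_Suc)

lemma set_op_comp:
  assumes "simp_op m n \<theta>" "simp_op k m \<phi>"
  shows "set (op_comp \<theta> \<phi>) \<subseteq> set \<theta>"
  using assms unfolding simp_op_def op_comp_def by (auto simp: le_imp_less_Suc)

lemma horn_closed:
  assumes "\<theta> \<in> horn n i m" "simp_op k m \<phi>"
  shows "op_comp \<theta> \<phi> \<in> horn n i k"
  using assms set_op_comp[of m n \<theta> k \<phi>] simp_op_comp[of m n \<theta> k \<phi>]
  unfolding horn_def by blast

lemma horn_subcomplex: "is_subcomplex (Delta n) (horn n i)"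
  unfolding is_subcomplex_def Delta_def
proof (intro conjI allI impI)
  fix m show "horn n i m \<subseteq> Simp \<lparr>Simp = \<lambda>m. {\<theta>. simp_op m n \<theta>}, Act = \<lambda>k \<phi> xs. op_comp xs \<phi>\<rparr> m"
    by (auto simp: horn_def)
next
  fix na m \<theta> x assume "simp_op m na \<theta> \<and> x \<in> horn n i na"
  then show "Act \<lparr>Simp = \<lambda>m. {\<theta>. simp_op m n \<theta>}, Act = \<lambda>k \<phi> xs. op_comp xs \<phi>\<rparr> na \<theta> x \<in> horn n i m"
    using horn_closed[of x n i na m \<theta>] by simp
qed

text \<open>pos b v is the index of v in the sorted list b, so that an inclusion of faces
  a \<subseteq> b becomes the simplicial operator map (pos b) a.\<close>

definition pos :: "nat list \<Rightarrow> nat \<Rightarrow> nat" where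
  "pos b v = length (filter (\<lambda>w. w < v) b)"

lemma pos_nth: "sorted b \<Longrightarrow> v \<in> set b \<Longrightarrow> pos b v < length b \<and> b ! pos b v = v"
proof (induction b)
  case Nil then show ?case by simp
next
  case (Cons a b)
  show ?case
  proof (cases "v = a")
    case True
    then have "filter (\<lambda>w. w < v) (a # b) = []" using Cons.prems(1) by (auto simp: filter_empty_conv)
    then show ?thesis using True by (simp add: pos_def)
  next
    case False
    then have v: "v \<in> set b" "a < v" using Cons.prems by auto
    then have "pos (a # b) v = Suc (pos b v)" by (simp add: pos_def)
    then show ?thesis using Cons.IH v Cons.prems(1) by simp
  qed
qed

lemma pos_mono: "v \<le> v' \<Longrightarrow> pos b v \<le> pos b v'"
  unfolding pos_def by (induction b) auto

lemma pos_nth_distinct: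
  "sorted b \<Longrightarrow> distinct b \<Longrightarrow> i < length b \<Longrightarrow> pos b (b ! i) = i"
proof (induction b arbitrary: i)
  case Nil then show ?case by simp
next
  case (Cons a b)
  show ?case
  proof (cases i)
    case 0
    then have "filter (\<lambda>w. w < a) (a # b) = []" using Cons.prems(1) by (auto simp: filter_empty_conv)
    then show ?thesis using 0 by (simp add: pos_def)
  next
    case (Suc j)
    then have j: "j < length b" using Cons.prems by simp
    have "b ! j \<in> set b" using j by simp
    then have "a < b ! j" using Cons.prems(1,2) by (metis distinct.simps(2) order_le_neq_trans sorted_simps(2))
    then have "pos (a # b) (b ! j) = Suc (pos b (b ! j))" by (simp add: pos_def)
    then show ?thesis using Cons.IH j Cons.prems Suc by simp
  qed
qed

lemma map_pos_simp_op:
  assumes "sorted b" "b \<noteq> []" "set \<theta> \<subseteq> set b" "sorted \<theta>" "length \<theta> = Suc m"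
  shows "simp_op m (length b - 1) (map (pos b) \<theta>)" "op_comp b (map (pos b) \<theta>) = \<theta>"
proof -
  have "sorted (map (pos b) \<theta>)"
    using assms(4) by (induction \<theta>) (auto simp: pos_mono)
  moreover have "\<forall>j\<in>set (map (pos b) \<theta>). j \<le> length b - 1"
    using assms pos_nth by fastforce
  ultimately show "simp_op m (length b - 1) (map (pos b) \<theta>)"
    using assms(5) by (simp add: simp_op_def)
  show "op_comp b (map (pos b) \<theta>) = \<theta>"
  proof -
    have "map (\<lambda>j. b ! j) (map (pos b) \<theta>) = map (\<lambda>v. b ! pos b v) \<theta>" by simp
    also have "\<dots> = \<theta>" by (rule map_idI) (use assms pos_nth in auto)
    finally show ?thesis unfolding op_comp_def .
  qed
qed

lemma map_pos_self:
  assumes "sorted b" "distinct b"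
  shows "map (pos b) b = [0..<length b]"
  by (rule nth_equalityI) (simp_all add: pos_nth_distinct assms)

lemma map_pos_comp:
  assumes "sorted b" "sorted a" "set c \<subseteq> set a" "set a \<subseteq> set b"
  shows "op_comp (map (pos b) a) (map (pos a) c) = map (pos b) c"
  unfolding op_comp_def using assms pos_nth
  by (auto intro!: map_cong)

section \<open>Nondegenerate faces of a simplicial subset of a standard simplex\<close>

lemma Delta_simps [simp]:
  "Simp (subsset (Delta n) K) = K" "Act (subsset (Delta n) K) = (\<lambda>k \<phi> xs. op_comp xs \<phi>)"
  "Simp (Delta n) m = {\<theta>. simp_op m n \<theta>}"
  by (simp_all add: Delta_def)

lemma subcomplex_DeltaD:
  assumes "is_subcomplex (Delta n) K"
  shows "\<And>m \<theta>. \<theta> \<in> K m \<Longrightarrow> simp_op m n \<theta>"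
    "\<And>m k \<theta> \<phi>. \<theta> \<in> K m \<Longrightarrow> simp_op k m \<phi> \<Longrightarrow> op_comp \<theta> \<phi> \<in> K k"
  using assms unfolding is_subcomplex_def by (auto simp: Delta_def)

lemma op_comp_map:
  "\<forall>j\<in>set \<phi>. j < length \<theta> \<Longrightarrow> op_comp (map f \<theta>) \<phi> = map f (op_comp \<theta> \<phi>)"
  unfolding op_comp_def by simp

lemma simp_op_lt: "simp_op m n \<theta> \<Longrightarrow> simp_op k m \<phi> \<Longrightarrow> \<forall>j\<in>set \<phi>. j < length \<theta>"
  unfolding simp_op_def by auto

lemma remdups_simp_op:
  assumes "simp_op m n \<theta>"
  shows "sorted (remdups \<theta>)" "distinct (remdups \<theta>)" "set (remdups \<theta>) = set \<theta>"
    "remdups \<theta> \<noteq> []" "length (remdups \<theta>) = Suc (length (remdups \<theta>) - 1)"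
    "simp_op (length (remdups \<theta>) - 1) m (map (pos \<theta>) (remdups \<theta>))"
    "op_comp \<theta> (map (pos \<theta>) (remdups \<theta>)) = remdups \<theta>"
proof -
  have t: "sorted \<theta>" "length \<theta> = Suc m" using assms by (auto simp: simp_op_def)
  then have ne: "\<theta> \<noteq> []" by auto
  show s: "sorted (remdups \<theta>)" "distinct (remdups \<theta>)" "set (remdups \<theta>) = set \<theta>"
    using t by auto
  show ne2: "remdups \<theta> \<noteq> []" using ne by simp
  show l: "length (remdups \<theta>) = Suc (length (remdups \<theta>) - 1)" using ne2 by (cases "remdups \<theta>") auto
  have "simp_op (length (remdups \<theta>) - 1) (length \<theta> - 1) (map (pos \<theta>) (remdups \<theta>))"
    using map_pos_simp_op(1)[OF t(1) ne _ s(1) l] s(3) by simp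
  then show "simp_op (length (remdups \<theta>) - 1) m (map (pos \<theta>) (remdups \<theta>))" using t by simp
  show "op_comp \<theta> (map (pos \<theta>) (remdups \<theta>)) = remdups \<theta>"
    using map_pos_simp_op(2)[OF t(1) ne _ s(1) l] s(3) by simp
qed

definition faces :: "(nat \<Rightarrow> nat list set) \<Rightarrow> nat list set" where
  "faces K = {b. distinct b \<and> b \<in> K (length b - 1)}"

lemma faces_finite:
  assumes "is_subcomplex (Delta n) K"
  shows "finite (faces K)"
proof -
  have "faces K \<subseteq> {xs. set xs \<subseteq> {0..n} \<and> length xs \<le> Suc n}"
  proof
    fix b assume "b \<in> faces K"
    then have b: "distinct b" "simp_op (length b - 1) n b"
      using subcomplex_DeltaD(1)[OF assms] by (auto simp: faces_def)
    then have "set b \<subseteq> {0..n}" by (auto simp: simp_op_def)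
    moreover have "length b = card (set b)" using b(1) by (simp add: distinct_card)
    moreover have "card (set b) \<le> card {0..n}" using \<open>set b \<subseteq> {0..n}\<close> by (rule card_mono[rotated]) simp
    ultimately show "b \<in> {xs. set xs \<subseteq> {0..n} \<and> length xs \<le> Suc n}" by simp
  qed
  moreover have "finite {xs. set xs \<subseteq> {0..n::nat} \<and> length xs \<le> Suc n}"
    by (rule finite_lists_length_le) simp
  ultimately show ?thesis by (rule finite_subset)
qed

lemma remdups_in_faces:
  assumes K: "is_subcomplex (Delta n) K" and "\<theta> \<in> K m"
  shows "remdups \<theta> \<in> faces K"
proof -
  have t: "simp_op m n \<theta>" using subcomplex_DeltaD(1)[OF K assms(2)] .
  have "op_comp \<theta> (map (pos \<theta>) (remdups \<theta>)) \<in> K (length (remdups \<theta>) - 1)"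
    using subcomplex_DeltaD(2)[OF K assms(2) remdups_simp_op(6)[OF t]] .
  then show ?thesis using remdups_simp_op[OF t] by (simp add: faces_def)
qed

lemma facesD:
  assumes K: "is_subcomplex (Delta n) K" and "b \<in> faces K"
  shows "sorted b" "distinct b" "b \<noteq> []" "length b = Suc (length b - 1)"
    "simp_op (length b - 1) n b" "b \<in> K (length b - 1)" "remdups b = b"
proof -
  show d: "distinct b" and k: "b \<in> K (length b - 1)" using assms(2) by (auto simp: faces_def)
  show s: "simp_op (length b - 1) n b" using subcomplex_DeltaD(1)[OF K k] .
  then show "sorted b" "length b = Suc (length b - 1)" by (auto simp: simp_op_def)
  then show "b \<noteq> []" by auto
  show "remdups b = b" using d by simp
qed

type_synonym face_pair = "nat list \<times> nat list"

definition face_category :: "(nat \<Rightarrow> nat list set) \<Rightarrow> (nat, nat) category" where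
  "face_category K = \<lparr>Obj = to_nat ` faces K,
     Mor = to_nat ` {(b, a). b \<in> faces K \<and> a \<in> faces K \<and> set a \<subseteq> set b},
     Dom = (\<lambda>u. to_nat (fst (from_nat u :: face_pair))),
     Cod = (\<lambda>u. to_nat (snd (from_nat u :: face_pair))),
     Comp = (\<lambda>v u. to_nat (fst (from_nat u :: face_pair), snd (from_nat v :: face_pair))),
     Idm = (\<lambda>j. to_nat (from_nat j :: nat list, from_nat j :: nat list))\<rparr>"

lemma is_category_face_category: "is_category (face_category K)"
  unfolding is_category_def face_category_def hom_def by auto

lemma finite_face_category: assumes "is_subcomplex (Delta n) K"
  shows "finite (Obj (face_category K))" "finite (Mor (face_category K))"
proof -
  have f: "finite (faces K)" using faces_finite[OF assms] .
  then show "finite (Obj (face_category K))" by (simp add: face_category_def)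
  have "{(b, a). b \<in> faces K \<and> a \<in> faces K \<and> set a \<subseteq> set b} \<subseteq> faces K \<times> faces K" by auto
  then have "finite {(b, a). b \<in> faces K \<and> a \<in> faces K \<and> set a \<subseteq> set b}"
    using f by (meson finite_SigmaI finite_subset)
  then show "finite (Mor (face_category K))" by (simp add: face_category_def)
qed

lemma sobjD:
  assumes "is_sobj C X"
  shows "\<And>n. Ob X n \<in> Obj C"
    "\<And>n m \<theta>. simp_op m n \<theta> \<Longrightarrow> Opm X n \<theta> \<in> hom C (Ob X n) (Ob X m)"
    "\<And>n. Opm X n [0..<Suc n] = Idm C (Ob X n)"
    "\<And>l m n \<theta> \<phi>. simp_op m n \<theta> \<Longrightarrow> simp_op l m \<phi> \<Longrightarrow>
        Comp C (Opm X m \<phi>) (Opm X n \<theta>) = Opm X n (op_comp \<theta> \<phi>)"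
  using assms unfolding is_sobj_def by blast+

definition face_obj :: "('o, 'm) sobj \<Rightarrow> nat \<Rightarrow> 'o" where
  "face_obj X j = Ob X (length (from_nat j :: nat list) - 1)"

definition face_mor :: "('o, 'm) sobj \<Rightarrow> nat \<Rightarrow> 'm" where
  "face_mor X u = (case from_nat u :: face_pair of (b, a) \<Rightarrow> Opm X (length b - 1) (map (pos b) a))"

lemma Mor_face_category: "u \<in> Mor (face_category K) \<longleftrightarrow> (\<exists>b a. u = to_nat (b, a) \<and> b \<in> faces K \<and> a \<in> faces K \<and> set a \<subseteq> set b)"
  by (auto simp: face_category_def)

lemma face_incl_simp_op:
  assumes K: "is_subcomplex (Delta n) K" and b: "b \<in> faces K" and a: "a \<in> faces K"
    and ab: "set a \<subseteq> set b"
  shows "simp_op (length a - 1) (length b - 1) (map (pos b) a)" "op_comp b (map (pos b) a) = a"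
  using map_pos_simp_op[OF facesD(1,3)[OF K b] ab facesD(1)[OF K a] facesD(4)[OF K a]] by auto

lemma is_functor_face_diagram:
  assumes C: "is_category C" and X: "is_sobj C X" and K: "is_subcomplex (Delta n) K"
  shows "is_functor (face_category K) C (face_obj X) (face_mor X)"
  unfolding is_functor_def
proof (intro conjI ballI allI impI)
  fix j assume "j \<in> Obj (face_category K)" then show "face_obj X j \<in> Obj C" using sobjD(1)[OF X] by (simp add: face_obj_def)
next
  fix u assume "u \<in> Mor (face_category K)"
  then obtain b a where u: "u = to_nat (b, a)" "b \<in> faces K" "a \<in> faces K" "set a \<subseteq> set b"
    unfolding Mor_face_category by blast
  have "Opm X (length b - 1) (map (pos b) a) \<in> hom C (Ob X (length b - 1)) (Ob X (length a - 1))"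
    using sobjD(2)[OF X face_incl_simp_op(1)[OF K u(2-4)]] .
  then show "face_mor X u \<in> hom C (face_obj X (Dom (face_category K) u)) (face_obj X (Cod (face_category K) u))"
    using u by (simp add: face_mor_def face_obj_def face_category_def)
next
  fix j assume "j \<in> Obj (face_category K)"
  then obtain b where j: "j = to_nat b" "b \<in> faces K" by (auto simp: face_category_def)
  have "map (pos b) b = [0..<Suc (length b - 1)]"
    using map_pos_self[OF facesD(1,2)[OF K j(2)]] facesD(4)[OF K j(2)] by simp
  then show "face_mor X (Idm (face_category K) j) = Idm C (face_obj X j)"
    using j sobjD(3)[OF X] by (simp add: face_mor_def face_obj_def face_category_def)
next
  fix u v assume uv: "u \<in> Mor (face_category K)" "v \<in> Mor (face_category K)" "Cod (face_category K) u = Dom (face_category K) v"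
  obtain b a where u: "u = to_nat (b, a)" "b \<in> faces K" "a \<in> faces K" "set a \<subseteq> set b"
    using uv(1) unfolding Mor_face_category by blast
  obtain a' c where v: "v = to_nat (a', c)" "a' \<in> faces K" "c \<in> faces K" "set c \<subseteq> set a'"
    using uv(2) unfolding Mor_face_category by blast
  have aa: "a' = a" using uv(3) u v by (simp add: face_category_def)
  have "Comp C (Opm X (length a - 1) (map (pos a) c)) (Opm X (length b - 1) (map (pos b) a))
      = Opm X (length b - 1) (op_comp (map (pos b) a) (map (pos a) c))"
    using sobjD(4)[OF X face_incl_simp_op(1)[OF K u(2-4)] face_incl_simp_op(1)[OF K u(3) v(3)]] v(4) aa
    by simp
  also have "op_comp (map (pos b) a) (map (pos a) c) = map (pos b) c"
    using map_pos_comp[OF facesD(1)[OF K u(2)] facesD(1)[OF K u(3)]] v(4) aa u(4) by simp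
  finally show "face_mor X (Comp (face_category K) v u) = Comp C (face_mor X v) (face_mor X u)"
    using u v aa by (simp add: face_mor_def face_category_def)
qed

lemma remdups_factor:
  assumes K: "is_subcomplex (Delta n) K" and t: "\<theta> \<in> K m"
  shows "remdups \<theta> \<in> faces K" "set \<theta> = set (remdups \<theta>)"
    "simp_op m (length (remdups \<theta>) - 1) (map (pos (remdups \<theta>)) \<theta>)"
    "op_comp (remdups \<theta>) (map (pos (remdups \<theta>)) \<theta>) = \<theta>"
proof -
  have s: "simp_op m n \<theta>" using subcomplex_DeltaD(1)[OF K t] .
  show f: "remdups \<theta> \<in> faces K" using remdups_in_faces[OF K t] .
  show "set \<theta> = set (remdups \<theta>)" by simp
  have st: "sorted \<theta>" "length \<theta> = Suc m" using s by (auto simp: simp_op_def)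
  note m = map_pos_simp_op[OF facesD(1,3)[OF K f] _ st(1) st(2)]
  show "simp_op m (length (remdups \<theta>) - 1) (map (pos (remdups \<theta>)) \<theta>)"
      "op_comp (remdups \<theta>) (map (pos (remdups \<theta>)) \<theta>) = \<theta>"
    using m by auto
qed

section \<open>Cones over simplicial sets and the objects Map(T, X)\<close>

lemma sconeD:
  assumes "is_scone C T X U d"
  shows "U \<in> Obj C" "\<And>n x. x \<in> Simp T n \<Longrightarrow> d n x \<in> hom C U (Ob X n)"
    "\<And>n m \<theta> x. simp_op m n \<theta> \<Longrightarrow> x \<in> Simp T n \<Longrightarrow> Comp C (Opm X n \<theta>) (d n x) = d m (Act T n \<theta> x)"
  using assms unfolding is_scone_def by blast+

lemma sconeI:
  assumes "U \<in> Obj C" "\<And>n x. x \<in> Simp T n \<Longrightarrow> d n x \<in> hom C U (Ob X n)"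
    "\<And>n m \<theta> x. simp_op m n \<theta> \<Longrightarrow> x \<in> Simp T n \<Longrightarrow> Comp C (Opm X n \<theta>) (d n x) = d m (Act T n \<theta> x)"
  shows "is_scone C T X U d"
  using assms unfolding is_scone_def by blast

lemma scone_comp:
  assumes C: "is_category C" and X: "is_sobj C X" and d: "is_scone C T X L c" and v: "v \<in> hom C U L"
  shows "is_scone C T X U (\<lambda>m y. Comp C (c m y) v)"
proof (rule sconeI)
  show "U \<in> Obj C" using cat_obj[OF C v] by simp
  fix n x assume x: "x \<in> Simp T n"
  show "Comp C (c n x) v \<in> hom C U (Ob X n)" using cat_comp[OF C v sconeD(2)[OF d x]] .
  fix m \<theta> assume t: "simp_op m n \<theta>"
  show "Comp C (Opm X n \<theta>) (Comp C (c n x) v) = Comp C (c m (Act T n \<theta> x)) v"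
    using cat_assoc[OF C v sconeD(2)[OF d x] sobjD(2)[OF X t]] sconeD(3)[OF d t x] by simp
qed

lemma scone_mono:
  assumes "is_scone C (subsset T F) X U d" "is_subcomplex T G" "\<And>n. G n \<subseteq> F n"
  shows "is_scone C (subsset T G) X U d"
proof (rule sconeI)
  show "U \<in> Obj C" using sconeD(1)[OF assms(1)] .
  fix n x assume x: "x \<in> Simp (subsset T G) n"
  then have xF: "x \<in> Simp (subsset T F) n" using assms(3) by auto
  show "d n x \<in> hom C U (Ob X n)" using sconeD(2)[OF assms(1) xF] .
  fix m \<theta> assume "simp_op m n \<theta>"
  then show "Comp C (Opm X n \<theta>) (d n x) = d m (Act (subsset T G) n \<theta> x)"
    using sconeD(3)[OF assms(1) _ xF] by simp
qed

lemma MapD: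
  assumes "is_Map C T X L c"
  shows "is_scone C T X L c" "\<And>U d. is_scone C T X U d \<Longrightarrow>
        \<exists>!u. u \<in> hom C U L \<and> (\<forall>n. \<forall>x \<in> Simp T n. Comp C (c n x) u = d n x)"
  using assms unfolding is_Map_def by (blast, elim conjE allE impE)

lemma is_MapI:
  assumes c: "is_scone C T X L c"
    and ex: "\<And>U d. is_scone C T X U d \<Longrightarrow> \<exists>u. u \<in> hom C U L \<and> is_restr C (Simp T) d c u"
    and uniq: "\<And>U v w. v \<in> hom C U L \<Longrightarrow> w \<in> hom C U L \<Longrightarrow>
      (\<And>n x. x \<in> Simp T n \<Longrightarrow> Comp C (c n x) v = Comp C (c n x) w) \<Longrightarrow> v = w"
  shows "is_Map C T X L c"
  unfolding is_Map_def
proof (intro conjI allI impI c)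
  fix U d assume "is_scone C T X U d"
  then obtain u where u: "u \<in> hom C U L" "is_restr C (Simp T) d c u" using ex by blast
  show "\<exists>!u. u \<in> hom C U L \<and> (\<forall>n. \<forall>x\<in>Simp T n. Comp C (c n x) u = d n x)"
  proof (rule ex1I[of _ u])
    fix w assume "w \<in> hom C U L \<and> (\<forall>n. \<forall>x\<in>Simp T n. Comp C (c n x) w = d n x)"
    then show "w = u" using uniq[of w U u] u unfolding is_restr_def by simp
  qed (use u in \<open>simp add: is_restr_def\<close>)
qed

lemma MapE:
  assumes "is_Map C T X L c" "is_scone C T X U d"
  obtains u where "u \<in> hom C U L" "\<And>n x. x \<in> Simp T n \<Longrightarrow> Comp C (c n x) u = d n x"
  using ex1_implies_ex[OF MapD(2)[OF assms]] by blast

lemma Map_restrE: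
  assumes "is_Map C T X L c" "is_scone C T X U d"
  obtains u where "u \<in> hom C U L" "is_restr C (Simp T) d c u"
  using ex1_implies_ex[OF MapD(2)[OF assms]] unfolding is_restr_def by blast

lemma Map_subcomplex_restrE:
  assumes "is_Map C (subsset T S) X L c" "is_scone C (subsset T S) X U d"
  obtains u where "u \<in> hom C U L" "is_restr C S d c u"
  using ex1_implies_ex[OF MapD(2)[OF assms]] unfolding is_restr_def by auto

lemma Map_uniq:
  assumes C: "is_category C" and X: "is_sobj C X" and M: "is_Map C T X L c"
    and v: "v \<in> hom C U L" and w: "w \<in> hom C U L"
    and e: "\<And>n x. x \<in> Simp T n \<Longrightarrow> Comp C (c n x) v = Comp C (c n x) w"
  shows "v = w"
proof -
  have s: "is_scone C T X U (\<lambda>m y. Comp C (c m y) v)" using scone_comp[OF C X MapD(1)[OF M] v] .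
  show ?thesis
    by (rule ex1_unique[OF MapD(2)[OF M s]]) (use v w e in auto)
qed

lemma Map_iso:
  assumes C: "is_category C" and X: "is_sobj C X" and M: "is_Map C T X L c" and M': "is_Map C T X L' c'"
    and w: "w \<in> hom C L L'" and e: "\<And>n x. x \<in> Simp T n \<Longrightarrow> Comp C (c' n x) w = c n x"
  shows "is_iso C w"
proof -
  obtain w' where w': "w' \<in> hom C L' L" "\<And>n x. x \<in> Simp T n \<Longrightarrow> Comp C (c n x) w' = c' n x"
    using MapE[OF M MapD(1)[OF M']] by blast
  have L: "L \<in> Obj C" and L': "L' \<in> Obj C" using cat_obj[OF C w] by auto
  have ch: "\<And>n x. x \<in> Simp T n \<Longrightarrow> c n x \<in> hom C L (Ob X n)" using sconeD(2)[OF MapD(1)[OF M]] .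
  have ch': "\<And>n x. x \<in> Simp T n \<Longrightarrow> c' n x \<in> hom C L' (Ob X n)" using sconeD(2)[OF MapD(1)[OF M']] .
  have left: "Comp C w' w = Idm C L"
  proof (rule Map_uniq[OF C X M cat_comp[OF C w w'(1)] cat_id[OF C L]])
    fix n x assume x: "x \<in> Simp T n"
    show "Comp C (c n x) (Comp C w' w) = Comp C (c n x) (Idm C L)"
      using cat_assoc[OF C w w'(1) ch[OF x]] w'(2)[OF x] e[OF x] cat_idr[OF C ch[OF x]] by simp
  qed
  have right: "Comp C w w' = Idm C L'"
  proof (rule Map_uniq[OF C X M' cat_comp[OF C w'(1) w] cat_id[OF C L']])
    fix n x assume x: "x \<in> Simp T n"
    show "Comp C (c' n x) (Comp C w w') = Comp C (c' n x) (Idm C L')"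
      using cat_assoc[OF C w'(1) w ch'[OF x]] w'(2)[OF x] e[OF x] cat_idr[OF C ch'[OF x]] by simp
  qed
  show ?thesis by (rule isoI[OF w w'(1) left right])
qed

section \<open>Map(K, X) for a simplicial subset K of a standard simplex\<close>

text \<open>Every simplex \<theta> of K factors through the nondegenerate face remdups \<theta>, so a cone
  over the diagram of nondegenerate faces of K extends uniquely to a cone over K.\<close>

definition face_cone ::
  "('o, 'm, 'x) category_scheme \<Rightarrow> ('o, 'm) sobj \<Rightarrow> (nat \<Rightarrow> 'm) \<Rightarrow> nat \<Rightarrow> nat list \<Rightarrow> 'm" where
  "face_cone C X lam m \<theta> =
     Comp C (Opm X (length (remdups \<theta>) - 1) (map (pos (remdups \<theta>)) \<theta>)) (lam (to_nat (remdups \<theta>)))"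

lemma diag_coneD:
  assumes "is_diag_cone J C Do Dm L lam"
  shows "L \<in> Obj C" "\<And>j. j \<in> Obj J \<Longrightarrow> lam j \<in> hom C L (Do j)"
    "\<And>u. u \<in> Mor J \<Longrightarrow> Comp C (Dm u) (lam (Dom J u)) = lam (Cod J u)"
  using assms unfolding is_diag_cone_def by blast+

lemma face_cone_legs:
  assumes K: "is_subcomplex (Delta n) K" and cone: "is_diag_cone (face_category K) C (face_obj X) (face_mor X) L lam"
  shows "\<And>b. b \<in> faces K \<Longrightarrow> lam (to_nat b) \<in> hom C L (Ob X (length b - 1))"
    "\<And>a b. b \<in> faces K \<Longrightarrow> a \<in> faces K \<Longrightarrow> set a \<subseteq> set b \<Longrightarrow>
       Comp C (Opm X (length b - 1) (map (pos b) a)) (lam (to_nat b)) = lam (to_nat a)"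
proof -
  show "lam (to_nat b) \<in> hom C L (Ob X (length b - 1))" if "b \<in> faces K" for b
    using diag_coneD(2)[OF cone, of "to_nat b"] that by (simp add: face_category_def face_obj_def)
  show "Comp C (Opm X (length b - 1) (map (pos b) a)) (lam (to_nat b)) = lam (to_nat a)"
    if "b \<in> faces K" "a \<in> faces K" "set a \<subseteq> set b" for a b
    using diag_coneD(3)[OF cone, of "to_nat (b, a)"] that
    by (simp add: face_category_def face_mor_def)
qed

lemma face_cone_hom:
  assumes C: "is_category C" and X: "is_sobj C X" and K: "is_subcomplex (Delta n) K"
    and cone: "is_diag_cone (face_category K) C (face_obj X) (face_mor X) L lam" and t: "\<theta> \<in> K m"
  shows "face_cone C X lam m \<theta> \<in> hom C L (Ob X m)"
  unfolding face_cone_def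
  by (rule cat_comp[OF C face_cone_legs(1)[OF K cone remdups_factor(1)[OF K t]]
        sobjD(2)[OF X remdups_factor(3)[OF K t]]])

lemma face_cone_face:
  assumes C: "is_category C" and X: "is_sobj C X" and K: "is_subcomplex (Delta n) K"
    and cone: "is_diag_cone (face_category K) C (face_obj X) (face_mor X) L lam" and b: "b \<in> faces K"
  shows "face_cone C X lam (length b - 1) b = lam (to_nat b)"
proof -
  have "map (pos b) b = [0..<Suc (length b - 1)]"
    using map_pos_self[OF facesD(1,2)[OF K b]] facesD(4)[OF K b] by simp
  then show ?thesis
    unfolding face_cone_def facesD(7)[OF K b]
    using sobjD(3)[OF X] cat_idl[OF C face_cone_legs(1)[OF K cone b]] by (simp del: upt_Suc)
qed

lemma face_cone_act:
  assumes C: "is_category C" and X: "is_sobj C X" and K: "is_subcomplex (Delta n) K"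
    and cone: "is_diag_cone (face_category K) C (face_obj X) (face_mor X) L lam"
    and t: "\<theta> \<in> K m" and p: "simp_op k m \<phi>"
  shows "Comp C (Opm X m \<phi>) (face_cone C X lam m \<theta>) = face_cone C X lam k (op_comp \<theta> \<phi>)"
proof -
  define \<theta>' where "\<theta>' = op_comp \<theta> \<phi>"
  define b where "b = remdups \<theta>"
  define b' where "b' = remdups \<theta>'"
  have t': "\<theta>' \<in> K k" using subcomplex_DeltaD(2)[OF K t p] by (simp add: \<theta>'_def)
  have fb: "b \<in> faces K" and fb': "b' \<in> faces K"
    using remdups_factor(1)[OF K t] remdups_factor(1)[OF K t'] by (auto simp: b_def b'_def)
  have sub: "set b' \<subseteq> set b"
    using set_op_comp[OF subcomplex_DeltaD(1)[OF K t] p] by (simp add: b_def b'_def \<theta>'_def)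
  have sp: "simp_op m (length b - 1) (map (pos b) \<theta>)"
    and sp': "simp_op k (length b' - 1) (map (pos b') \<theta>')"
    using remdups_factor(3)[OF K t] remdups_factor(3)[OF K t'] by (simp_all add: b_def b'_def)
  have spb: "simp_op (length b' - 1) (length b - 1) (map (pos b) b')"
    using face_incl_simp_op(1)[OF K fb fb' sub] .
  have lb: "lam (to_nat b) \<in> hom C L (Ob X (length b - 1))" using face_cone_legs(1)[OF K cone fb] .
  \<comment> \<open>Both sides factor through the face b' of b.\<close>
  have "map (pos b) \<theta>' = op_comp (map (pos b) b') (map (pos b') \<theta>')"
    using map_pos_comp[OF facesD(1)[OF K fb] facesD(1)[OF K fb'] _ sub] by (simp add: b'_def)
  moreover have "op_comp (map (pos b) \<theta>) \<phi> = map (pos b) \<theta>'"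
    unfolding \<theta>'_def by (rule op_comp_map[OF simp_op_lt[OF subcomplex_DeltaD(1)[OF K t] p]])
  ultimately have "Comp C (Opm X m \<phi>) (Opm X (length b - 1) (map (pos b) \<theta>)) =
      Comp C (Opm X (length b' - 1) (map (pos b') \<theta>')) (Opm X (length b - 1) (map (pos b) b'))"
    using sobjD(4)[OF X sp p] sobjD(4)[OF X spb sp'] by simp
  then have "Comp C (Opm X m \<phi>) (face_cone C X lam m \<theta>) =
      Comp C (Opm X (length b' - 1) (map (pos b') \<theta>'))
        (Comp C (Opm X (length b - 1) (map (pos b) b')) (lam (to_nat b)))"
    unfolding face_cone_def b_def[symmetric]
    using cat_assoc[OF C lb sobjD(2)[OF X sp] sobjD(2)[OF X p]]
      cat_assoc[OF C lb sobjD(2)[OF X spb] sobjD(2)[OF X sp']] by simp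
  also have "\<dots> = face_cone C X lam k \<theta>'"
    unfolding face_cone_def b'_def[symmetric] face_cone_legs(2)[OF K cone fb fb' sub] ..
  finally show ?thesis by (simp add: \<theta>'_def)
qed

lemma scone_face_cone:
  assumes C: "is_category C" and X: "is_sobj C X" and K: "is_subcomplex (Delta n) K"
    and cone: "is_diag_cone (face_category K) C (face_obj X) (face_mor X) L lam"
  shows "is_scone C (subsset (Delta n) K) X L (face_cone C X lam)"
  using diag_coneD(1)[OF cone] face_cone_hom[OF C X K cone] face_cone_act[OF C X K cone]
  by (intro sconeI) simp_all

lemma face_cone_comp:
  assumes C: "is_category C" and X: "is_sobj C X" and K: "is_subcomplex (Delta n) K"
    and cone: "is_diag_cone (face_category K) C (face_obj X) (face_mor X) L lam"
    and v: "v \<in> hom C U L" and t: "\<theta> \<in> K m"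
  shows "Comp C (face_cone C X lam m \<theta>) v = face_cone C X (\<lambda>j. Comp C (lam j) v) m \<theta>"
  unfolding face_cone_def
  using cat_assoc[OF C v face_cone_legs(1)[OF K cone remdups_factor(1)[OF K t]]
      sobjD(2)[OF X remdups_factor(3)[OF K t]]] by simp

definition scone_faces :: "(nat \<Rightarrow> nat list \<Rightarrow> 'm) \<Rightarrow> nat \<Rightarrow> 'm" where
  "scone_faces d j = d (length (from_nat j :: nat list) - 1) (from_nat j)"

lemma diag_cone_scone_faces:
  assumes K: "is_subcomplex (Delta n) K" and d: "is_scone C (subsset (Delta n) K) X U d"
  shows "is_diag_cone (face_category K) C (face_obj X) (face_mor X) U (scone_faces d)"
  unfolding is_diag_cone_def
proof (intro conjI ballI)
  show "U \<in> Obj C" using sconeD(1)[OF d] .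
next
  fix j assume "j \<in> Obj (face_category K)"
  then obtain b where "j = to_nat b" "b \<in> faces K" by (auto simp: face_category_def)
  then show "scone_faces d j \<in> hom C U (face_obj X j)"
    using sconeD(2)[OF d, of b] facesD(6)[OF K] by (simp add: scone_faces_def face_obj_def)
next
  fix u assume "u \<in> Mor (face_category K)"
  then obtain b a where u: "u = to_nat (b, a)" "b \<in> faces K" "a \<in> faces K" "set a \<subseteq> set b"
    unfolding Mor_face_category by blast
  have "Comp C (Opm X (length b - 1) (map (pos b) a)) (d (length b - 1) b) = d (length a - 1) a"
    using sconeD(3)[OF d face_incl_simp_op(1)[OF K u(2-4)], of b] facesD(6)[OF K u(2)]
      face_incl_simp_op(2)[OF K u(2-4)] by simp
  then show "Comp C (face_mor X u) (scone_faces d (Dom (face_category K) u))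
      = scone_faces d (Cod (face_category K) u)"
    using u by (simp add: face_mor_def face_category_def scone_faces_def)
qed

lemma face_cone_scone_faces:
  assumes K: "is_subcomplex (Delta n) K" and d: "is_scone C (subsset (Delta n) K) X U d"
    and t: "\<theta> \<in> K m"
  shows "face_cone C X (scone_faces d) m \<theta> = d m \<theta>"
  using sconeD(3)[OF d remdups_factor(3)[OF K t], of "remdups \<theta>"] facesD(6)[OF K remdups_factor(1)[OF K t]]
    remdups_factor(4)[OF K t]
  by (simp add: face_cone_def scone_faces_def)

lemma Map_face_limit:
  assumes C: "is_category C" and X: "is_sobj C X" and K: "is_subcomplex (Delta n) K"
    and lim: "is_diag_limit (face_category K) C (face_obj X) (face_mor X) L lam"
  shows "is_Map C (subsset (Delta n) K) X L (face_cone C X lam)"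
proof (rule is_MapI)
  have cone: "is_diag_cone (face_category K) C (face_obj X) (face_mor X) L lam"
    using lim unfolding is_diag_limit_def by (elim conjE)
  have univ: "\<exists>!v. v \<in> hom C U L \<and> (\<forall>j \<in> Obj (face_category K). Comp C (lam j) v = scone_faces d j)"
    if "is_scone C (subsset (Delta n) K) X U d" for U d
    using lim diag_cone_scone_faces[OF K that] unfolding is_diag_limit_def by blast
  show "is_scone C (subsset (Delta n) K) X L (face_cone C X lam)"
    by (rule scone_face_cone[OF C X K cone])
  fix U d assume d: "is_scone C (subsset (Delta n) K) X U d"
  then obtain v where v: "v \<in> hom C U L" "\<forall>j \<in> Obj (face_category K). Comp C (lam j) v = scone_faces d j"
    using univ by blast
  have "Comp C (face_cone C X lam m \<theta>) v = d m \<theta>" if t: "\<theta> \<in> K m" for m \<theta>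
  proof -
    have "Comp C (lam (to_nat (remdups \<theta>))) v = scone_faces d (to_nat (remdups \<theta>))"
      using v(2) remdups_factor(1)[OF K t] by (simp add: face_category_def)
    then show ?thesis
      using face_cone_comp[OF C X K cone v(1) t] face_cone_scone_faces[OF K d t]
      by (simp add: face_cone_def)
  qed
  then show "\<exists>v. v \<in> hom C U L \<and> is_restr C (Simp (subsset (Delta n) K)) d (face_cone C X lam) v"
    using v(1) unfolding is_restr_def by auto
next
  fix U v w assume v: "v \<in> hom C U L" and w: "w \<in> hom C U L"
    and eq: "\<And>m \<theta>. \<theta> \<in> Simp (subsset (Delta n) K) m \<Longrightarrow>
      Comp C (face_cone C X lam m \<theta>) v = Comp C (face_cone C X lam m \<theta>) w"
  have cone: "is_diag_cone (face_category K) C (face_obj X) (face_mor X) L lam"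
    using lim unfolding is_diag_limit_def by (elim conjE)
  let ?d = "\<lambda>m \<theta>. Comp C (face_cone C X lam m \<theta>) v"
  have "Comp C (lam j) u = scone_faces ?d j" if jO: "j \<in> Obj (face_category K)" and u: "u = v \<or> u = w"
    for j u
  proof -
    obtain b where j: "j = to_nat b" "b \<in> faces K" using jO by (auto simp: face_category_def)
    then show ?thesis
      using eq[of b "length b - 1"] facesD(6)[OF K j(2)] face_cone_face[OF C X K cone j(2)] u
      by (auto simp: scone_faces_def)
  qed
  then show "v = w"
    using lim diag_cone_scone_faces[OF K scone_comp[OF C X scone_face_cone[OF C X K cone] v]] v w
    unfolding is_diag_limit_def by (metis (no_types, lifting))
qed

lemma Map_subcomplex_Delta_exists:
  assumes C: "is_category C" and L: "has_finite_limits C" and X: "is_sobj C X"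
    and K: "is_subcomplex (Delta n) K"
  obtains M c where "is_Map C (subsset (Delta n) K) X M c"
proof -
  obtain M lam where "is_diag_limit (face_category K) C (face_obj X) (face_mor X) M lam"
    using L is_category_face_category finite_face_category[OF K] is_functor_face_diagram[OF C X K]
    unfolding has_finite_limits_def by blast
  then show ?thesis using Map_face_limit[OF C X K] that by blast
qed

section \<open>Gluing cones along a horn pushout\<close>

lemma ssetD:
  assumes "is_sset T"
  shows "\<And>n m \<theta> x. simp_op m n \<theta> \<Longrightarrow> x \<in> Simp T n \<Longrightarrow> Act T n \<theta> x \<in> Simp T m"
    "\<And>n x. x \<in> Simp T n \<Longrightarrow> Act T n [0..<Suc n] x = x"
    "\<And>l m n \<theta> \<phi> x. simp_op m n \<theta> \<Longrightarrow> simp_op l m \<phi> \<Longrightarrow> x \<in> Simp T n \<Longrightarrow>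
        Act T m \<phi> (Act T n \<theta> x) = Act T n (op_comp \<theta> \<phi>) x"
  using assms unfolding is_sset_def by blast+

lemma subcomplexD:
  assumes "is_subcomplex T F"
  shows "\<And>n. F n \<subseteq> Simp T n" "\<And>n m \<theta> x. simp_op m n \<theta> \<Longrightarrow> x \<in> F n \<Longrightarrow> Act T n \<theta> x \<in> F m"
  using assms unfolding is_subcomplex_def by blast+

lemma horn_pushoutD:
  assumes "horn_pushout T F F' n i x"
  shows "x \<in> Simp T n" "\<And>m \<theta>. \<theta> \<in> horn n i m \<Longrightarrow> Act T n \<theta> x \<in> F m"
    "\<And>m. F' m = F m \<union> (\<lambda>\<theta>. Act T n \<theta> x) ` {\<theta>. simp_op m n \<theta>}"
    "\<And>m. inj_on (\<lambda>\<theta>. Act T n \<theta> x) ({\<theta>. simp_op m n \<theta>} - horn n i m)"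
    "\<And>m \<theta>. simp_op m n \<theta> \<Longrightarrow> \<theta> \<notin> horn n i m \<Longrightarrow> Act T n \<theta> x \<notin> F m"
  using assms unfolding horn_pushout_def by blast+

lemma horn_pushout_mono:
  assumes "horn_pushout T F F' n i x"
  shows "F m \<subseteq> F' m"
  using horn_pushoutD(3)[OF assms, of m] by blast

lemma horn_pushout_new_simplex:
  assumes hp: "horn_pushout T F F' n i x" and y: "y \<in> F' m" "y \<notin> F m"
  shows "\<exists>\<theta>. simp_op m n \<theta> \<and> \<theta> \<notin> horn n i m \<and> Act T n \<theta> x = y"
proof -
  obtain \<theta> where t: "simp_op m n \<theta>" "y = Act T n \<theta> x"
    using y horn_pushoutD(3)[OF hp, of m] by auto
  moreover have "\<theta> \<notin> horn n i m" using horn_pushoutD(2)[OF hp] t(2) y(2) by auto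
  ultimately show ?thesis by auto
qed

lemma horn_pushout_simplex:
  assumes T: "is_sset T" and hp: "horn_pushout T F F' n i x"
  shows "x \<in> F' n"
proof -
  have "Act T n [0..<Suc n] x \<in> F' n" using horn_pushoutD(3)[OF hp, of n] simp_op_id[of n] by blast
  then show ?thesis using ssetD(2)[OF T horn_pushoutD(1)[OF hp]] by simp
qed

text \<open>glue d g extends a cone d over F by the value g on the new simplex x. A simplex y of F'
  outside F is x\<theta> for some \<theta> off the horn, unique since x is injective there.\<close>

definition preimage_op :: "'a sset \<Rightarrow> nat \<Rightarrow> nat \<Rightarrow> 'a \<Rightarrow> nat \<Rightarrow> 'a \<Rightarrow> nat list" where
  "preimage_op T n i x m y = (SOME \<theta>. simp_op m n \<theta> \<and> \<theta> \<notin> horn n i m \<and> Act T n \<theta> x = y)"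

definition glue ::
  "('o, 'm, 'x) category_scheme \<Rightarrow> ('o, 'm) sobj \<Rightarrow> 'a sset \<Rightarrow> (nat \<Rightarrow> 'a set) \<Rightarrow> nat \<Rightarrow> nat \<Rightarrow> 'a
    \<Rightarrow> (nat \<Rightarrow> 'a \<Rightarrow> 'm) \<Rightarrow> 'm \<Rightarrow> nat \<Rightarrow> 'a \<Rightarrow> 'm" where
  "glue C X T F n i x d g m y =
     (if y \<in> F m then d m y else Comp C (Opm X n (preimage_op T n i x m y)) g)"

lemma preimage_op:
  assumes hp: "horn_pushout T F F' n i x" and "y \<in> F' m" "y \<notin> F m"
  shows "simp_op m n (preimage_op T n i x m y)" "Act T n (preimage_op T n i x m y) x = y"
proof -
  let ?P = "\<lambda>\<theta>. simp_op m n \<theta> \<and> \<theta> \<notin> horn n i m \<and> Act T n \<theta> x = y"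
  have "\<exists>\<theta>. ?P \<theta>" using horn_pushout_new_simplex[OF assms] .
  then have "?P (preimage_op T n i x m y)" unfolding preimage_op_def by (rule someI_ex)
  then show "simp_op m n (preimage_op T n i x m y)" "Act T n (preimage_op T n i x m y) x = y"
    by simp_all
qed

lemma glue_in_F: "y \<in> F m \<Longrightarrow> glue C X T F n i x d g m y = d m y"
  by (simp add: glue_def)

lemma glue_off_F:
  "y \<notin> F m \<Longrightarrow> glue C X T F n i x d g m y = Comp C (Opm X n (preimage_op T n i x m y)) g"
  by (simp add: glue_def)

lemma glue_cong:
  "(\<And>m y. y \<in> F m \<Longrightarrow> d m y = d' m y) \<Longrightarrow> glue C X T F n i x d = glue C X T F n i x d'"
  by (intro ext) (simp add: glue_def)

lemma glue_act:
  assumes hp: "horn_pushout T F F' n i x" and t: "simp_op m n \<theta>"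
    and hg: "is_restr C (horn n i) (\<lambda>m \<theta>. d m (Act T n \<theta> x)) (\<lambda>m \<theta>. Opm X n \<theta>) g"
  shows "glue C X T F n i x d g m (Act T n \<theta> x) = Comp C (Opm X n \<theta>) g"
proof (cases "\<theta> \<in> horn n i m")
  case True
  then show ?thesis
    using horn_pushoutD(2)[OF hp True] hg unfolding is_restr_def by (simp add: glue_def)
next
  case False
  let ?P = "\<lambda>\<theta>'. simp_op m n \<theta>' \<and> \<theta>' \<notin> horn n i m \<and> Act T n \<theta>' x = Act T n \<theta> x"
  have "?P \<theta>" using t False by simp
  then have "?P (preimage_op T n i x m (Act T n \<theta> x))" unfolding preimage_op_def by (rule someI)
  \<comment> \<open>Here the injectivity of x away from the horn is needed.\<close>
  then have "preimage_op T n i x m (Act T n \<theta> x) = \<theta>"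
    using inj_onD[OF horn_pushoutD(4)[OF hp, of m], of "preimage_op T n i x m (Act T n \<theta> x)" \<theta>]
      t False by simp
  then show ?thesis using horn_pushoutD(5)[OF hp t False] by (simp add: glue_def)
qed

lemma glue_simplex:
  assumes C: "is_category C" and X: "is_sobj C X" and T: "is_sset T"
    and hp: "horn_pushout T F F' n i x" and g: "g \<in> hom C U (Ob X n)"
    and hg: "is_restr C (horn n i) (\<lambda>m \<theta>. d m (Act T n \<theta> x)) (\<lambda>m \<theta>. Opm X n \<theta>) g"
  shows "glue C X T F n i x d g n x = g"
  using glue_act[OF hp simp_op_id hg] ssetD(2)[OF T horn_pushoutD(1)[OF hp]] sobjD(3)[OF X]
    cat_idl[OF C g] by (simp del: upt_Suc)

lemma glue_comp:
  assumes C: "is_category C" and X: "is_sobj C X" and hp: "horn_pushout T F F' n i x"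
    and g: "g \<in> hom C U (Ob X n)" and v: "v \<in> hom C V U" and y: "y \<in> F' m"
  shows "Comp C (glue C X T F n i x d g m y) v
    = glue C X T F n i x (\<lambda>m y. Comp C (d m y) v) (Comp C g v) m y"
proof (cases "y \<in> F m")
  case True
  then show ?thesis by (simp add: glue_def)
next
  case False
  then show ?thesis
    using cat_assoc[OF C v g sobjD(2)[OF X preimage_op(1)[OF hp y False]]] by (simp add: glue_off_F)
qed

lemma glue_restrict:
  assumes T: "is_sset T" and hp: "horn_pushout T F F' n i x"
    and d: "is_scone C (subsset T F') X U d" and y: "y \<in> F' m"
  shows "glue C X T F n i x d (d n x) m y = d m y"
proof (cases "y \<in> F m")
  case True
  then show ?thesis by (rule glue_in_F)
next
  case False
  then show ?thesis
    using sconeD(3)[OF d preimage_op(1)[OF hp y False], of x] preimage_op(2)[OF hp y False]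
      horn_pushout_simplex[OF T hp] by (simp add: glue_off_F)
qed

lemma glue_scone:
  assumes C: "is_category C" and X: "is_sobj C X" and T: "is_sset T" and F: "is_subcomplex T F"
    and hp: "horn_pushout T F F' n i x"
    and d: "is_scone C (subsset T F) X U d" and g: "g \<in> hom C U (Ob X n)"
    and hg: "is_restr C (horn n i) (\<lambda>m \<theta>. d m (Act T n \<theta> x)) (\<lambda>m \<theta>. Opm X n \<theta>) g"
  shows "is_scone C (subsset T F') X U (glue C X T F n i x d g)"
proof (rule sconeI)
  show "U \<in> Obj C" using sconeD(1)[OF d] .
next
  fix m y assume "y \<in> Simp (subsset T F') m"
  then have y: "y \<in> F' m" by simp
  show "glue C X T F n i x d g m y \<in> hom C U (Ob X m)"
  proof (cases "y \<in> F m")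
    case True
    then show ?thesis using sconeD(2)[OF d, of y m] by (simp add: glue_in_F)
  next
    case False
    then show ?thesis
      using cat_comp[OF C g sobjD(2)[OF X preimage_op(1)[OF hp y False]]] by (simp add: glue_off_F)
  qed
next
  fix m k \<phi> y assume p: "simp_op k m \<phi>" and "y \<in> Simp (subsset T F') m"
  then have y: "y \<in> F' m" by simp
  show "Comp C (Opm X m \<phi>) (glue C X T F n i x d g m y)
      = glue C X T F n i x d g k (Act (subsset T F') m \<phi> y)"
  proof (cases "y \<in> F m")
    case True
    then show ?thesis using subcomplexD(2)[OF F p] sconeD(3)[OF d p, of y] by (simp add: glue_in_F)
  next
    case False
    define \<theta> where "\<theta> = preimage_op T n i x m y"
    have t: "simp_op m n \<theta>" "y = Act T n \<theta> x"
      using preimage_op[OF hp y False] by (simp_all add: \<theta>_def)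
    have "Comp C (Opm X m \<phi>) (glue C X T F n i x d g m y)
        = Comp C (Opm X m \<phi>) (Comp C (Opm X n \<theta>) g)"
      using glue_act[OF hp t(1) hg] t(2) by simp
    also have "\<dots> = Comp C (Opm X n (op_comp \<theta> \<phi>)) g"
      using cat_assoc[OF C g sobjD(2)[OF X t(1)] sobjD(2)[OF X p]] sobjD(4)[OF X t(1) p] by simp
    also have "\<dots> = glue C X T F n i x d g k (Act T n (op_comp \<theta> \<phi>) x)"
      using glue_act[OF hp simp_op_comp[OF t(1) p] hg] by simp
    finally show ?thesis using ssetD(3)[OF T t(1) p horn_pushoutD(1)[OF hp]] t(2) by simp
  qed
qed

lemma scone_along_simplex:
  assumes T: "is_sset T" and e: "is_scone C (subsset T G) X U e" and x: "x \<in> Simp T n"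
    and K: "is_subcomplex (Delta n) K" and KG: "\<And>m \<theta>. \<theta> \<in> K m \<Longrightarrow> Act T n \<theta> x \<in> G m"
  shows "is_scone C (subsset (Delta n) K) X U (\<lambda>m \<theta>. e m (Act T n \<theta> x))"
proof (rule sconeI)
  show "U \<in> Obj C" using sconeD(1)[OF e] .
next
  fix m \<theta> assume "\<theta> \<in> Simp (subsset (Delta n) K) m"
  then show "e m (Act T n \<theta> x) \<in> hom C U (Ob X m)" using sconeD(2)[OF e, of "Act T n \<theta> x" m] KG by simp
next
  fix m k \<phi> \<theta> assume p: "simp_op k m \<phi>" and "\<theta> \<in> Simp (subsset (Delta n) K) m"
  then have t: "\<theta> \<in> K m" by simp
  have "Act T m \<phi> (Act T n \<theta> x) = Act T n (op_comp \<theta> \<phi>) x"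
    using ssetD(3)[OF T subcomplex_DeltaD(1)[OF K t] p x] .
  then show "Comp C (Opm X m \<phi>) (e m (Act T n \<theta> x)) = e k (Act T n (Act (subsset (Delta n) K) m \<phi> \<theta>) x)"
    using sconeD(3)[OF e p, of "Act T n \<theta> x"] KG[OF t] by simp
qed

lemma scone_Opm:
  assumes X: "is_sobj C X" and K: "is_subcomplex (Delta n) K"
  shows "is_scone C (subsset (Delta n) K) X (Ob X n) (\<lambda>m \<theta>. Opm X n \<theta>)"
proof (rule sconeI)
  show "Ob X n \<in> Obj C" using sobjD(1)[OF X] .
next
  fix m \<theta> assume "\<theta> \<in> Simp (subsset (Delta n) K) m"
  then show "Opm X n \<theta> \<in> hom C (Ob X n) (Ob X m)" using sobjD(2)[OF X subcomplex_DeltaD(1)[OF K]] by simp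
next
  fix m k \<phi> \<theta> assume p: "simp_op k m \<phi>" and "\<theta> \<in> Simp (subsset (Delta n) K) m"
  then show "Comp C (Opm X m \<phi>) (Opm X n \<theta>) = Opm X n (Act (subsset (Delta n) K) m \<phi> \<theta>)"
    using sobjD(4)[OF X subcomplex_DeltaD(1)[OF K] p] by simp
qed

section \<open>Restriction along an expansion\<close>

lemma k_groupoidD:
  assumes "k_groupoid C cov k X"
  shows "is_sobj C X"
    "\<And>n i L c u. 0 < n \<Longrightarrow> i \<le> n \<Longrightarrow> is_Map C (subsset (Delta n) (horn n i)) X L c \<Longrightarrow>
       u \<in> hom C (Ob X n) L \<Longrightarrow> is_restr C (horn n i) (\<lambda>m \<theta>. Opm X n \<theta>) c u \<Longrightarrow>
       u \<in> cov \<and> (k < n \<longrightarrow> is_iso C u)"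
proof -
  show "is_sobj C X" using assms unfolding k_groupoid_def by (rule conjunct1)
  have "\<forall>n i L c u. 0 < n \<and> i \<le> n \<and> is_Map C (subsset (Delta n) (horn n i)) X L c \<and>
      u \<in> hom C (Ob X n) L \<and> is_restr C (horn n i) (\<lambda>m \<theta>. Opm X n \<theta>) c u \<longrightarrow>
      u \<in> cov \<and> (k < n \<longrightarrow> is_iso C u)"
    using assms unfolding k_groupoid_def by (rule conjunct2)
  then show "\<And>n i L c u. 0 < n \<Longrightarrow> i \<le> n \<Longrightarrow> is_Map C (subsset (Delta n) (horn n i)) X L c \<Longrightarrow>
       u \<in> hom C (Ob X n) L \<Longrightarrow> is_restr C (horn n i) (\<lambda>m \<theta>. Opm X n \<theta>) c u \<Longrightarrow>
       u \<in> cov \<and> (k < n \<longrightarrow> is_iso C u)"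
    by blast
qed

lemma horn_restriction_exists:
  assumes C: "is_category C" and L: "has_finite_limits C" and X: "is_sobj C X"
  obtains LH cH h where "is_Map C (subsset (Delta n) (horn n i)) X LH cH"
    "h \<in> hom C (Ob X n) LH" "is_restr C (horn n i) (\<lambda>m \<theta>. Opm X n \<theta>) cH h"
proof -
  obtain LH cH where MH: "is_Map C (subsset (Delta n) (horn n i)) X LH cH"
    using Map_subcomplex_Delta_exists[OF C L X horn_subcomplex] .
  obtain h where h: "h \<in> hom C (Ob X n) LH"
    "\<And>m \<theta>. \<theta> \<in> horn n i m \<Longrightarrow> Comp C (cH m \<theta>) h = Opm X n \<theta>"
    using MapE[OF MH scone_Opm[OF X horn_subcomplex]] by auto
  then have "is_restr C (horn n i) (\<lambda>m \<theta>. Opm X n \<theta>) cH h" unfolding is_restr_def by blast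
  with MH h(1) show ?thesis by (rule that)
qed

lemma is_restr_trans:
  assumes C: "is_category C" and SF: "\<And>n. S n \<subseteq> F n"
    and q: "q \<in> hom C M L" and q': "q' \<in> hom C P M"
    and cS: "\<And>n y. y \<in> S n \<Longrightarrow> cS n y \<in> hom C L (Z n)"
    and "is_restr C S cF cS q" "is_restr C F cP cF q'"
  shows "is_restr C S cP cS (Comp C q q')"
  unfolding is_restr_def
proof (intro allI ballI)
  fix n y assume y: "y \<in> S n"
  have "Comp C (cS n y) (Comp C q q') = Comp C (Comp C (cS n y) q) q'"
    using cat_assoc[OF C q' q cS[OF y]] .
  moreover have "y \<in> F n" using SF y by blast
  ultimately show "Comp C (cS n y) (Comp C q q') = cP n y"
    using assms(6,7) y unfolding is_restr_def by simp
qed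

lemma is_restr_square:
  assumes C: "is_category C" and cH: "\<And>m \<theta>. \<theta> \<in> K m \<Longrightarrow> cH m \<theta> \<in> hom C Z (W m)"
    and h: "h \<in> hom C A Z" and r: "r \<in> hom C B Z" and p1: "p1 \<in> hom C P A" and p2: "p2 \<in> hom C P B"
    and sq: "Comp C h p1 = Comp C r p2"
    and "is_restr C K \<alpha> cH h" "is_restr C K \<beta> cH r"
  shows "is_restr C K (\<lambda>m \<theta>. Comp C (\<beta> m \<theta>) p2) \<alpha> p1"
  unfolding is_restr_def
proof (intro allI ballI)
  fix m \<theta> assume t: "\<theta> \<in> K m"
  have "Comp C (\<alpha> m \<theta>) p1 = Comp C (cH m \<theta>) (Comp C h p1)"
    using assms(8) t cat_assoc[OF C p1 h cH[OF t]] unfolding is_restr_def by auto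
  also have "\<dots> = Comp C (\<beta> m \<theta>) p2"
    using assms(9) t sq cat_assoc[OF C p2 r cH[OF t]] unfolding is_restr_def by auto
  finally show "Comp C (\<alpha> m \<theta>) p1 = Comp C (\<beta> m \<theta>) p2" .
qed

lemma restr_unique:
  assumes C: "is_category C" and X: "is_sobj C X" and M: "is_Map C (subsset T S) X L c"
    and u: "u \<in> hom C U L" and u': "u' \<in> hom C U L"
    and "is_restr C S d c u" "is_restr C S d c u'"
  shows "u = u'"
  using Map_uniq[OF C X M u u'] assms(6,7) unfolding is_restr_def by simp

lemma horn_restrictions_agree:
  assumes C: "is_category C" and X: "is_sobj C X" and T: "is_sset T"
    and hp: "horn_pushout T F F' n i x"
    and MH: "is_Map C (subsset (Delta n) (horn n i)) X LH cH"
    and h: "h \<in> hom C (Ob X n) LH" "is_restr C (horn n i) (\<lambda>m \<theta>. Opm X n \<theta>) cH h"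
    and r: "r \<in> hom C L LH" "is_restr C (horn n i) (\<lambda>m \<theta>. c m (Act T n \<theta> x)) cH r"
    and d: "is_scone C (subsset T F') X U d" and v: "v \<in> hom C U L" "is_restr C F d c v"
  shows "Comp C h (d n x) = Comp C r v"
proof -
  have g: "d n x \<in> hom C U (Ob X n)"
    using sconeD(2)[OF d, of x n] horn_pushout_simplex[OF T hp] by simp
  show ?thesis
  proof (rule Map_uniq[OF C X MH cat_comp[OF C g h(1)] cat_comp[OF C v(1) r(1)]])
    fix m \<theta> assume "\<theta> \<in> Simp (subsset (Delta n) (horn n i)) m"
    then have t: "\<theta> \<in> horn n i m" by simp
    have cH: "cH m \<theta> \<in> hom C LH (Ob X m)" using sconeD(2)[OF MapD(1)[OF MH], of \<theta> m] t by simp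
    have "Comp C (cH m \<theta>) (Comp C h (d n x)) = Comp C (Opm X n \<theta>) (d n x)"
      using cat_assoc[OF C g h(1) cH] h(2) t unfolding is_restr_def by simp
    also have "\<dots> = d m (Act T n \<theta> x)"
      using sconeD(3)[OF d, of m n \<theta> x] t horn_pushout_simplex[OF T hp] by (simp add: horn_def)
    also have "\<dots> = Comp C (cH m \<theta>) (Comp C r v)"
      using cat_assoc[OF C v(1) r(1) cH] r(2) v(2) t horn_pushoutD(2)[OF hp t]
      unfolding is_restr_def by simp
    finally show "Comp C (cH m \<theta>) (Comp C h (d n x)) = Comp C (cH m \<theta>) (Comp C r v)" .
  qed
qed

lemma glue_factor:
  assumes C: "is_category C" and X: "is_sobj C X" and T: "is_sset T"
    and hp: "horn_pushout T F F' n i x"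
    and g: "g \<in> hom C P (Ob X n)" and v: "v \<in> hom C U P"
    and d': "is_scone C (subsset T F') X U d'"
    and "Comp C g v = d' n x" and "\<And>m y. y \<in> F m \<Longrightarrow> Comp C (d m y) v = d' m y"
    and y: "y \<in> F' m"
  shows "Comp C (glue C X T F n i x d g m y) v = d' m y"
proof -
  have "Comp C (glue C X T F n i x d g m y) v
      = glue C X T F n i x (\<lambda>m y. Comp C (d m y) v) (Comp C g v) m y"
    by (rule glue_comp[OF C X hp g v y])
  also have "\<dots> = glue C X T F n i x d' (d' n x) m y"
  proof -
    have "glue C X T F n i x (\<lambda>m y. Comp C (d m y) v) = glue C X T F n i x d'"
      by (rule glue_cong) (rule assms(9))
    then show ?thesis using assms(8) by simp
  qed
  also have "\<dots> = d' m y" by (rule glue_restrict[OF T hp d' y])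
  finally show ?thesis .
qed

lemma Map_horn_pushout:
  assumes C: "is_category C" and X: "is_sobj C X" and T: "is_sset T" and F: "is_subcomplex T F"
    and hp: "horn_pushout T F F' n i x" and M: "is_Map C (subsset T F) X L c"
    and MH: "is_Map C (subsset (Delta n) (horn n i)) X LH cH"
    and h: "h \<in> hom C (Ob X n) LH" "is_restr C (horn n i) (\<lambda>m \<theta>. Opm X n \<theta>) cH h"
    and r: "r \<in> hom C L LH" "is_restr C (horn n i) (\<lambda>m \<theta>. c m (Act T n \<theta> x)) cH r"
    and pb: "is_pullback C h r P p1 p2"
  shows "is_Map C (subsset T F') X P (glue C X T F n i x (\<lambda>m y. Comp C (c m y) p2) p1)"
proof -
  let ?c' = "glue C X T F n i x (\<lambda>m y. Comp C (c m y) p2) p1"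
  have p1: "p1 \<in> hom C P (Ob X n)" and p2: "p2 \<in> hom C P L"
    using pullbackD(2,3)[OF pb] h(1) r(1) by (auto simp: hom_def)
  have ch: "\<And>m y. y \<in> F m \<Longrightarrow> c m y \<in> hom C L (Ob X m)"
    using sconeD(2)[OF MapD(1)[OF M]] by simp
  have cH: "\<And>m \<theta>. \<theta> \<in> horn n i m \<Longrightarrow> cH m \<theta> \<in> hom C LH (Ob X m)"
    using sconeD(2)[OF MapD(1)[OF MH]] by simp
  have hg: "is_restr C (horn n i) (\<lambda>m \<theta>. Comp C (c m (Act T n \<theta> x)) p2) (\<lambda>m \<theta>. Opm X n \<theta>) p1"
    using is_restr_square[OF C cH h(1) r(1) p1 p2 pullbackD(4)[OF pb] h(2) r(2)] .
  show ?thesis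
  proof (rule is_MapI)
    show "is_scone C (subsset T F') X P ?c'"
      by (rule glue_scone[OF C X T F hp scone_comp[OF C X MapD(1)[OF M] p2] p1 hg])
  next
    fix U d' assume d': "is_scone C (subsset T F') X U d'"
    obtain v2 where v2: "v2 \<in> hom C U L" "is_restr C F d' c v2"
      by (rule Map_subcomplex_restrE[OF M scone_mono[OF d' F horn_pushout_mono[OF hp]]])
    have "d' n x \<in> hom C U (Dom C h)" "v2 \<in> hom C U (Dom C r)"
      using sconeD(2)[OF d', of x n] horn_pushout_simplex[OF T hp] v2(1) h(1) r(1)
      by (simp_all add: hom_def)
    then obtain v where v: "v \<in> hom C U P" "Comp C p1 v = d' n x" "Comp C p2 v = v2"
      using pullback_univ[OF pb _ _ horn_restrictions_agree[OF C X T hp MH h r d' v2] C] by blast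
    have "is_restr C F' d' ?c' v"
      using glue_factor[OF C X T hp p1 v(1) d' v(2)] cat_assoc[OF C v(1) p2 ch] v(3) v2(2)
      unfolding is_restr_def by simp
    then show "\<exists>v. v \<in> hom C U P \<and> is_restr C (Simp (subsset T F')) d' ?c' v" using v(1) by auto
  next
    fix U v w assume v: "v \<in> hom C U P" and w: "w \<in> hom C U P"
      and eq: "\<And>m y. y \<in> Simp (subsset T F') m \<Longrightarrow> Comp C (?c' m y) v = Comp C (?c' m y) w"
    show "v = w"
    proof (rule pullback_uniq[OF C pb v w])
      show "Comp C p1 v = Comp C p1 w"
        using eq[of x n] glue_simplex[OF C X T hp p1 hg] horn_pushout_simplex[OF T hp] by simp
      show "Comp C p2 v = Comp C p2 w"
      proof (rule Map_uniq[OF C X M cat_comp[OF C v p2] cat_comp[OF C w p2]])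
        fix m y assume "y \<in> Simp (subsset T F) m"
        then have y: "y \<in> F m" "y \<in> F' m" using horn_pushout_mono[OF hp] by auto
        then show "Comp C (c m y) (Comp C p2 v) = Comp C (c m y) (Comp C p2 w)"
          using eq[of y m] cat_assoc[OF C v p2 ch[OF y(1)]] cat_assoc[OF C w p2 ch[OF y(1)]]
          by (simp add: glue_in_F)
      qed
    qed
  qed
qed

text \<open>The filtration of an m-expansion, without the weak monotonicity of the dimensions n_l,
  which the argument does not need.\<close>

definition horn_filtration ::
  "'a sset \<Rightarrow> nat \<Rightarrow> nat \<Rightarrow> (nat \<Rightarrow> nat \<Rightarrow> 'a set) \<Rightarrow> (nat \<Rightarrow> nat) \<Rightarrow> (nat \<Rightarrow> nat) \<Rightarrow> (nat \<Rightarrow> 'a)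
    \<Rightarrow> bool" where
  "horn_filtration T m N F nn ii xs \<longleftrightarrow> (\<forall>l \<le> N. is_subcomplex T (F l)) \<and>
     (\<forall>l < N. 0 < m \<and> m \<le> nn l \<and> ii l \<le> nn l \<and> horn_pushout T (F l) (F (Suc l)) (nn l) (ii l) (xs l))"

lemma m_expansionE:
  assumes "m_expansion T m S"
  obtains N F nn ii xs where "F 0 = S" "F N = Simp T" "horn_filtration T m N F nn ii xs"
proof -
  have m: "0 < m" using assms unfolding m_expansion_def by (elim conjE)
  have "\<exists>N F nn ii xs. F 0 = S \<and> F N = Simp T \<and> (\<forall>l \<le> N. is_subcomplex T (F l)) \<and>
      (\<forall>l < N. m \<le> nn l \<and> ii l \<le> nn l \<and> (\<forall>l'. l \<le> l' \<and> l' < N \<longrightarrow> nn l \<le> nn l') \<and>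
        horn_pushout T (F l) (F (Suc l)) (nn l) (ii l) (xs l))"
    using assms unfolding m_expansion_def by (elim conjE)
  then obtain N F nn ii xs where H: "F 0 = S \<and> F N = Simp T \<and> (\<forall>l \<le> N. is_subcomplex T (F l)) \<and>
      (\<forall>l < N. m \<le> nn l \<and> ii l \<le> nn l \<and> (\<forall>l'. l \<le> l' \<and> l' < N \<longrightarrow> nn l \<le> nn l') \<and>
        horn_pushout T (F l) (F (Suc l)) (nn l) (ii l) (xs l))"
    by (elim exE)
  show ?thesis
  proof (rule that)
    show "F 0 = S" "F N = Simp T" using H by simp_all
    show "horn_filtration T m N F nn ii xs" using H m unfolding horn_filtration_def by simp
  qed
qed

lemma m_expansion_subcomplex: "m_expansion T m S \<Longrightarrow> is_subcomplex T S"
  unfolding m_expansion_def by (elim conjE)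

lemma horn_filtrationD:
  assumes "horn_filtration T m N F nn ii xs" "l < N"
  shows "is_subcomplex T (F l)" "0 < nn l" "m \<le> nn l" "ii l \<le> nn l"
    "horn_pushout T (F l) (F (Suc l)) (nn l) (ii l) (xs l)"
  using assms unfolding horn_filtration_def by auto

lemma horn_filtration_mono:
  assumes "horn_filtration T m N F nn ii xs" "l \<le> N"
  shows "F 0 j \<subseteq> F l j"
  using assms(2)
proof (induction l)
  case (Suc l)
  then have "l < N" by simp
  then have "F l j \<subseteq> F (Suc l) j" by (rule horn_pushout_mono[OF horn_filtrationD(5)[OF assms(1)]])
  then show ?case using Suc.IH \<open>l < N\<close> by simp
qed simp

lemma Map_horn_pushout_restr:
  assumes D: "descent_category C cov" and G: "k_groupoid C cov k X" and T: "is_sset T"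
    and F: "is_subcomplex T F" and hp: "horn_pushout T F F' n i x" and n: "0 < n" "i \<le> n"
    and M: "is_Map C (subsset T F) X L c"
  obtains P c' q where "is_Map C (subsset T F') X P c'" "q \<in> hom C P L" "is_restr C F c' c q"
    "q \<in> cov \<and> (k < n \<longrightarrow> is_iso C q)"
proof -
  have C: "is_category C" and X: "is_sobj C X"
    using descent_categoryD(1)[OF D] k_groupoidD(1)[OF G] .
  obtain LH cH h where MH: "is_Map C (subsset (Delta n) (horn n i)) X LH cH"
    and h: "h \<in> hom C (Ob X n) LH" "is_restr C (horn n i) (\<lambda>m \<theta>. Opm X n \<theta>) cH h"
    using horn_restriction_exists[OF C descent_categoryD(2)[OF D] X] .
  have good: "h \<in> cov \<and> (k < n \<longrightarrow> is_iso C h)" by (rule k_groupoidD(2)[OF G n MH h])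
  have "is_scone C (subsset (Delta n) (horn n i)) X L (\<lambda>m \<theta>. c m (Act T n \<theta> x))"
    using scone_along_simplex[OF T MapD(1)[OF M] horn_pushoutD(1)[OF hp] horn_subcomplex]
      horn_pushoutD(2)[OF hp] by simp
  then obtain r where r: "r \<in> hom C L LH" "is_restr C (horn n i) (\<lambda>m \<theta>. c m (Act T n \<theta> x)) cH r"
    using MapE[OF MH] unfolding is_restr_def by (metis Delta_simps(1))
  obtain P p1 p2 where pb: "is_pullback C h r P p1 p2"
    using pullback_exists[OF C descent_categoryD(2)[OF D] h(1) r(1)] .
  have p2: "p2 \<in> hom C P L" using pullbackD(3)[OF pb] r(1) by (simp add: hom_def)
  have "is_restr C F (glue C X T F n i x (\<lambda>m y. Comp C (c m y) p2) p1) c p2"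
    unfolding is_restr_def by (simp add: glue_in_F)
  moreover have "p2 \<in> cov \<and> (k < n \<longrightarrow> is_iso C p2)"
    using descent_categoryD(5)[OF D _ pb] pullback_iso[OF C pb] good by blast
  ultimately show ?thesis
    using that Map_horn_pushout[OF C X T F hp M MH h r pb] p2 by blast
qed

lemma Map_filtration_restr:
  assumes D: "descent_category C cov" and G: "k_groupoid C cov k X" and T: "is_sset T"
    and filt: "horn_filtration T m N F nn ii xs"
    and M0: "is_Map C (subsset T (F 0)) X L0 c0" and l: "l \<le> N"
  shows "\<exists>M c q. is_Map C (subsset T (F l)) X M c \<and> q \<in> hom C M L0 \<and> is_restr C (F 0) c c0 q \<and>
    q \<in> cov \<and> (k < m \<longrightarrow> is_iso C q)"
  using l
proof (induction l)
  case 0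
  have "L0 \<in> Obj C" using sconeD(1)[OF MapD(1)[OF M0]] .
  moreover have "is_restr C (F 0) c0 c0 (Idm C L0)"
    unfolding is_restr_def
  proof (intro allI ballI)
    fix j y assume "y \<in> F 0 j"
    then show "Comp C (c0 j y) (Idm C L0) = c0 j y"
      using cat_idr[OF descent_categoryD(1)[OF D] sconeD(2)[OF MapD(1)[OF M0]]] by simp
  qed
  ultimately show ?case
    using M0 cat_id[OF descent_categoryD(1)[OF D]] cover_iso_id[OF D] by blast
next
  case (Suc l)
  then obtain M c q where IH: "is_Map C (subsset T (F l)) X M c" "q \<in> hom C M L0"
    "is_restr C (F 0) c c0 q" "q \<in> cov \<and> (k < m \<longrightarrow> is_iso C q)"
    by auto
  have lN: "l < N" using Suc.prems by simp
  note step = horn_filtrationD[OF filt lN]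
  obtain P c' q' where P: "is_Map C (subsset T (F (Suc l))) X P c'" "q' \<in> hom C P M"
    "is_restr C (F l) c' c q'" "q' \<in> cov \<and> (k < nn l \<longrightarrow> is_iso C q')"
    by (rule Map_horn_pushout_restr[OF D G T step(1,5,2,4) IH(1)])
  have "is_restr C (F 0) c' c0 (Comp C q q')"
    using is_restr_trans[OF descent_categoryD(1)[OF D] horn_filtration_mono[OF filt] IH(2) P(2)
        sconeD(2)[OF MapD(1)[OF M0]] IH(3) P(3)] lN by simp
  moreover have "Comp C q q' \<in> cov \<and> (k < m \<longrightarrow> is_iso C (Comp C q q'))"
    using cover_iso_comp[OF D P(2) IH(2)] P(4) IH(4) step(3) by auto
  ultimately show ?case using P(1) cat_comp[OF descent_categoryD(1)[OF D] P(2) IH(2)] by blast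
qed

lemma restr_Map_expansion_cover:
  assumes D: "descent_category C cov" and T: "is_sset T" and E: "m_expansion T m S"
    and G: "k_groupoid C cov k X"
    and MT: "is_Map C T X LT cT" and MS: "is_Map C (subsset T S) X LS cS"
    and u: "u \<in> hom C LT LS" and ur: "is_restr C S cT cS u"
  shows "u \<in> cov \<and> (k < m \<longrightarrow> is_iso C u)"
proof -
  have C: "is_category C" and X: "is_sobj C X"
    using descent_categoryD(1)[OF D] k_groupoidD(1)[OF G] .
  obtain N F nn ii xs where F0: "F 0 = S" and FN: "F N = Simp T"
    and filt: "horn_filtration T m N F nn ii xs"
    using m_expansionE[OF E] .
  obtain M c q where M: "is_Map C T X M c" and q: "q \<in> hom C M LS" "is_restr C S c cS q"
    "q \<in> cov \<and> (k < m \<longrightarrow> is_iso C q)"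
    using Map_filtration_restr[OF D G T filt, of LS cS N] MS F0 FN by auto
  obtain w where w: "w \<in> hom C LT M" "is_restr C (Simp T) cT c w"
    using MapE[OF M MapD(1)[OF MT]] unfolding is_restr_def by metis
  have "is_iso C w" using Map_iso[OF C X MT M w(1)] w(2) unfolding is_restr_def by blast
  then have "w \<in> cov \<and> (k < m \<longrightarrow> is_iso C w)" using iso_cover[OF D w(1)] by blast
  moreover have "u = Comp C q w"
    using restr_unique[OF C X MS u cat_comp[OF C w(1) q(1)] ur] subcomplexD(1)[OF m_expansion_subcomplex[OF E]]
      is_restr_trans[OF C _ q(1) w(1) sconeD(2)[OF MapD(1)[OF MS]] q(2) w(2)] by simp
  ultimately show ?thesis using cover_iso_comp[OF D w(1) q(1) _ q(3)] by simp
qed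

section \<open>Relative mapping objects\<close>

definition compatible_over ::
  "('o, 'm, 'x) category_scheme \<Rightarrow> (nat \<Rightarrow> 'm) \<Rightarrow> (nat \<Rightarrow> 'a set) \<Rightarrow> (nat \<Rightarrow> 'a \<Rightarrow> 'm)
    \<Rightarrow> (nat \<Rightarrow> 'a \<Rightarrow> 'm) \<Rightarrow> bool" where
  "compatible_over C f F d dY \<longleftrightarrow> (\<forall>n. \<forall>y\<in>F n. Comp C (f n) (d n y) = dY n y)"

text \<open>(M, e, eY) represents Map(F \<hookrightarrow> T, f), the pullback of Map(F, X) and Map(T, Y) over
  Map(F, Y): it classifies pairs of cones over F into X and over T into Y that agree over F
  after applying f.\<close>

definition is_relMap ::
  "('o, 'm, 'x) category_scheme \<Rightarrow> 'a sset \<Rightarrow> ('o, 'm) sobj \<Rightarrow> ('o, 'm) sobj \<Rightarrow> (nat \<Rightarrow> 'm)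
    \<Rightarrow> (nat \<Rightarrow> 'a set) \<Rightarrow> 'o \<Rightarrow> (nat \<Rightarrow> 'a \<Rightarrow> 'm) \<Rightarrow> (nat \<Rightarrow> 'a \<Rightarrow> 'm) \<Rightarrow> bool" where
  "is_relMap C T X Y f F M e eY \<longleftrightarrow>
     is_scone C (subsset T F) X M e \<and> is_scone C T Y M eY \<and> compatible_over C f F e eY \<and>
     (\<forall>U d dY. is_scone C (subsset T F) X U d \<and> is_scone C T Y U dY \<and> compatible_over C f F d dY \<longrightarrow>
        (\<exists>!v. v \<in> hom C U M \<and> is_restr C F d e v \<and> is_restr C (Simp T) dY eY v))"

lemma is_relMapD:
  assumes "is_relMap C T X Y f F M e eY"
  shows "is_scone C (subsset T F) X M e" "is_scone C T Y M eY" "compatible_over C f F e eY"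
    "\<And>U d dY. is_scone C (subsset T F) X U d \<Longrightarrow> is_scone C T Y U dY \<Longrightarrow>
       compatible_over C f F d dY \<Longrightarrow>
       \<exists>!v. v \<in> hom C U M \<and> is_restr C F d e v \<and> is_restr C (Simp T) dY eY v"
proof -
  note a = assms[unfolded is_relMap_def]
  show "is_scone C (subsset T F) X M e" "is_scone C T Y M eY" "compatible_over C f F e eY"
    using a by simp_all
  have "\<forall>U d dY. is_scone C (subsset T F) X U d \<and> is_scone C T Y U dY \<and> compatible_over C f F d dY \<longrightarrow>
      (\<exists>!v. v \<in> hom C U M \<and> is_restr C F d e v \<and> is_restr C (Simp T) dY eY v)"
    using a by (elim conjE)
  then show "\<And>U d dY. is_scone C (subsset T F) X U d \<Longrightarrow> is_scone C T Y U dY \<Longrightarrow>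
       compatible_over C f F d dY \<Longrightarrow>
       \<exists>!v. v \<in> hom C U M \<and> is_restr C F d e v \<and> is_restr C (Simp T) dY eY v"
    by blast
qed

lemma is_relMapI:
  assumes "is_scone C (subsset T F) X M e" "is_scone C T Y M eY" "compatible_over C f F e eY"
    and ex: "\<And>U d dY. is_scone C (subsset T F) X U d \<Longrightarrow> is_scone C T Y U dY \<Longrightarrow>
      compatible_over C f F d dY \<Longrightarrow>
      \<exists>v. v \<in> hom C U M \<and> is_restr C F d e v \<and> is_restr C (Simp T) dY eY v"
    and uniq: "\<And>U v w. v \<in> hom C U M \<Longrightarrow> w \<in> hom C U M \<Longrightarrow>
      (\<And>n y. y \<in> F n \<Longrightarrow> Comp C (e n y) v = Comp C (e n y) w) \<Longrightarrow>
      (\<And>n y. y \<in> Simp T n \<Longrightarrow> Comp C (eY n y) v = Comp C (eY n y) w) \<Longrightarrow> v = w"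
  shows "is_relMap C T X Y f F M e eY"
  unfolding is_relMap_def
proof (intro conjI allI impI assms(1-3), elim conjE)
  fix U d dY assume "is_scone C (subsset T F) X U d" "is_scone C T Y U dY" "compatible_over C f F d dY"
  then obtain v where v: "v \<in> hom C U M" "is_restr C F d e v" "is_restr C (Simp T) dY eY v"
    using ex by blast
  show "\<exists>!v. v \<in> hom C U M \<and> is_restr C F d e v \<and> is_restr C (Simp T) dY eY v"
  proof (rule ex1I[of _ v])
    fix w assume "w \<in> hom C U M \<and> is_restr C F d e w \<and> is_restr C (Simp T) dY eY w"
    then show "w = v" using uniq[of w U v] v unfolding is_restr_def by simp
  qed (use v in simp)
qed

lemma is_relMapE:
  assumes "is_relMap C T X Y f F M e eY" "is_scone C (subsset T F) X U d" "is_scone C T Y U dY"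
    "compatible_over C f F d dY"
  obtains v where "v \<in> hom C U M" "is_restr C F d e v" "is_restr C (Simp T) dY eY v"
  using ex1_implies_ex[OF is_relMapD(4)[OF assms]] by blast

lemma smorphD:
  assumes "is_smorph C X Y f"
  shows "is_sobj C X" "is_sobj C Y" "\<And>n. f n \<in> hom C (Ob X n) (Ob Y n)"
    "\<And>n m \<theta>. simp_op m n \<theta> \<Longrightarrow> Comp C (f m) (Opm X n \<theta>) = Comp C (Opm Y n \<theta>) (f n)"
  using assms unfolding is_smorph_def by simp_all

lemma compatible_over_comp:
  assumes C: "is_category C" and fs: "is_smorph C X Y f" and e: "is_scone C (subsset T F) X M e"
    and "compatible_over C f F e eY" and v: "v \<in> hom C U M"
  shows "compatible_over C f F (\<lambda>m y. Comp C (e m y) v) (\<lambda>m y. Comp C (eY m y) v)"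
  using assms(4) cat_assoc[OF C v sconeD(2)[OF e] smorphD(3)[OF fs]]
  unfolding compatible_over_def by simp

lemma relMap_uniq:
  assumes C: "is_category C" and fs: "is_smorph C X Y f" and R: "is_relMap C T X Y f F M e eY"
    and v: "v \<in> hom C U M" and w: "w \<in> hom C U M"
    and "\<And>n y. y \<in> F n \<Longrightarrow> Comp C (e n y) v = Comp C (e n y) w"
    and "\<And>n y. y \<in> Simp T n \<Longrightarrow> Comp C (eY n y) v = Comp C (eY n y) w"
  shows "v = w"
proof -
  note X = smorphD(1)[OF fs] and Y = smorphD(2)[OF fs]
  have "\<exists>!u. u \<in> hom C U M \<and> is_restr C F (\<lambda>m y. Comp C (e m y) v) e u \<and>
      is_restr C (Simp T) (\<lambda>m y. Comp C (eY m y) v) eY u"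
    by (rule is_relMapD(4)[OF R scone_comp[OF C X is_relMapD(1)[OF R] v]
          scone_comp[OF C Y is_relMapD(2)[OF R] v]
          compatible_over_comp[OF C fs is_relMapD(1)[OF R] is_relMapD(3)[OF R] v]])
  then show ?thesis
    by (rule ex1_unique) (use v w assms(6,7) in \<open>auto simp: is_restr_def\<close>)
qed

lemma push_scone:
  assumes C: "is_category C" and fs: "is_smorph C X Y f" and c: "is_scone C T X L c"
  shows "is_scone C T Y L (\<lambda>m y. Comp C (f m) (c m y))"
proof (rule sconeI)
  show "L \<in> Obj C" using sconeD(1)[OF c] .
  fix n x assume x: "x \<in> Simp T n"
  show "Comp C (f n) (c n x) \<in> hom C L (Ob Y n)" using cat_comp[OF C sconeD(2)[OF c x] smorphD(3)[OF fs]] .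
  fix m \<theta> assume t: "simp_op m n \<theta>"
  have "Comp C (Opm Y n \<theta>) (Comp C (f n) (c n x)) = Comp C (Comp C (f m) (Opm X n \<theta>)) (c n x)"
    using cat_assoc[OF C sconeD(2)[OF c x] smorphD(3)[OF fs] sobjD(2)[OF smorphD(2)[OF fs] t]]
      smorphD(4)[OF fs t] by simp
  also have "\<dots> = Comp C (f m) (c m (Act T n \<theta> x))"
    using cat_assoc[OF C sconeD(2)[OF c x] sobjD(2)[OF smorphD(1)[OF fs] t] smorphD(3)[OF fs]]
      sconeD(3)[OF c t x] by simp
  finally show "Comp C (Opm Y n \<theta>) (Comp C (f n) (c n x)) = Comp C (f m) (c m (Act T n \<theta> x))" .
qed

lemma op_comp_id_left: "simp_op m n \<theta> \<Longrightarrow> op_comp [0..<Suc n] \<theta> = \<theta>"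
  unfolding op_comp_def simp_op_def by (intro map_idI) (simp del: upt_Suc add: le_imp_less_Suc)

lemma subcomplex_Delta_all: "is_subcomplex (Delta n) (Simp (Delta n))"
  unfolding is_subcomplex_def Delta_def by (auto simp: simp_op_comp)

lemma Map_Delta:
  assumes C: "is_category C" and Y: "is_sobj C Y"
  shows "is_Map C (Delta n) Y (Ob Y n) (\<lambda>m \<theta>. Opm Y n \<theta>)"
  unfolding is_Map_def
proof (intro conjI allI impI)
  show "is_scone C (Delta n) Y (Ob Y n) (\<lambda>m \<theta>. Opm Y n \<theta>)"
    using scone_Opm[OF Y subcomplex_Delta_all] by simp
  fix U d assume d: "is_scone C (Delta n) Y U d"
  have dn: "d n [0..<Suc n] \<in> hom C U (Ob Y n)" using sconeD(2)[OF d] simp_op_id by simp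
  have "Comp C (Opm Y n \<theta>) (d n [0..<Suc n]) = d m \<theta>" if "\<theta> \<in> Simp (Delta n) m" for m \<theta>
    using sconeD(3)[OF d _ , of m n \<theta> "[0..<Suc n]"] simp_op_id that op_comp_id_left
    by (simp del: upt_Suc add: Delta_def)
  moreover have "w = d n [0..<Suc n]"
    if "w \<in> hom C U (Ob Y n)" "\<forall>m. \<forall>\<theta>\<in>Simp (Delta n) m. Comp C (Opm Y n \<theta>) w = d m \<theta>" for w
  proof -
    have "\<forall>\<theta>. simp_op n n \<theta> \<longrightarrow> Comp C (Opm Y n \<theta>) w = d n \<theta>" using that(2) by (simp add: Delta_def)
    then have "Comp C (Opm Y n [0..<Suc n]) w = d n [0..<Suc n]" using simp_op_id[of n] by blast
    then show ?thesis using cat_idl[OF C that(1)] sobjD(3)[OF Y, of n] by (simp only:)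
  qed
  ultimately show "\<exists>!u. u \<in> hom C U (Ob Y n) \<and>
      (\<forall>m. \<forall>\<theta>\<in>Simp (Delta n) m. Comp C (Opm Y n \<theta>) u = d m \<theta>)"
    using dn by blast
qed

lemma relMap_pullback:
  assumes C: "is_category C" and fs: "is_smorph C X Y f" and ES: "is_subcomplex T S"
    and MSX: "is_Map C (subsset T S) X LSX cSX" and MSY: "is_Map C (subsset T S) Y LSY cSY"
    and MTY: "is_Map C T Y LTY cTY"
    and a: "a \<in> hom C LSX LSY" "is_push C S f cSX cSY a"
    and b: "b \<in> hom C LTY LSY" "is_restr C S cTY cSY b"
    and pb: "is_pullback C a b P p1 p2"
  shows "is_relMap C T X Y f S P (\<lambda>n y. Comp C (cSX n y) p1) (\<lambda>n y. Comp C (cTY n y) p2)"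
proof -
  note X = smorphD(1)[OF fs] and Y = smorphD(2)[OF fs]
  have p1: "p1 \<in> hom C P LSX" and p2: "p2 \<in> hom C P LTY"
    using pullbackD(2,3)[OF pb] a(1) b(1) by (auto simp: hom_def)
  have cSX: "\<And>n y. y \<in> S n \<Longrightarrow> cSX n y \<in> hom C LSX (Ob X n)"
    and cSY: "\<And>n y. y \<in> S n \<Longrightarrow> cSY n y \<in> hom C LSY (Ob Y n)"
    and cTY: "\<And>n y. y \<in> Simp T n \<Longrightarrow> cTY n y \<in> hom C LTY (Ob Y n)"
    using sconeD(2)[OF MapD(1)[OF MSX]] sconeD(2)[OF MapD(1)[OF MSY]] sconeD(2)[OF MapD(1)[OF MTY]]
    by simp_all
  have aR: "is_restr C S (\<lambda>n y. Comp C (f n) (cSX n y)) cSY a"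
    using a(2) unfolding is_push_def is_restr_def by simp
  show ?thesis
  proof (rule is_relMapI)
    show "is_scone C (subsset T S) X P (\<lambda>n y. Comp C (cSX n y) p1)"
      "is_scone C T Y P (\<lambda>n y. Comp C (cTY n y) p2)"
      using scone_comp[OF C X MapD(1)[OF MSX] p1] scone_comp[OF C Y MapD(1)[OF MTY] p2] .
    show "compatible_over C f S (\<lambda>n y. Comp C (cSX n y) p1) (\<lambda>n y. Comp C (cTY n y) p2)"
      using is_restr_square[OF C cSY a(1) b(1) p1 p2 pullbackD(4)[OF pb] aR b(2)]
        cat_assoc[OF C p1 cSX smorphD(3)[OF fs]] unfolding compatible_over_def is_restr_def by simp
  next
    fix U d dY assume d: "is_scone C (subsset T S) X U d" and dY: "is_scone C T Y U dY"
      and cp: "compatible_over C f S d dY"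
    obtain v1 where v1: "v1 \<in> hom C U LSX" "is_restr C S d cSX v1"
      by (rule Map_subcomplex_restrE[OF MSX d])
    obtain v2 where v2: "v2 \<in> hom C U LTY" "is_restr C (Simp T) dY cTY v2"
      by (rule Map_restrE[OF MTY dY])
    have "Comp C a v1 = Comp C b v2"
    proof (rule Map_uniq[OF C Y MSY cat_comp[OF C v1(1) a(1)] cat_comp[OF C v2(1) b(1)]])
      fix n y assume "y \<in> Simp (subsset T S) n"
      then have y: "y \<in> S n" "y \<in> Simp T n" using subcomplexD(1)[OF ES] by auto
      have "Comp C (cSY n y) (Comp C a v1) = Comp C (f n) (Comp C (cSX n y) v1)"
        using cat_assoc[OF C v1(1) a(1) cSY[OF y(1)]] cat_assoc[OF C v1(1) cSX[OF y(1)] smorphD(3)[OF fs]]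
          aR y(1) unfolding is_restr_def by simp
      also have "\<dots> = Comp C (cSY n y) (Comp C b v2)"
        using cat_assoc[OF C v2(1) b(1) cSY[OF y(1)]] b(2) v1(2) v2(2) cp y
        unfolding is_restr_def compatible_over_def by simp
      finally show "Comp C (cSY n y) (Comp C a v1) = Comp C (cSY n y) (Comp C b v2)" .
    qed
    moreover have "v1 \<in> hom C U (Dom C a)" "v2 \<in> hom C U (Dom C b)"
      using v1(1) v2(1) a(1) b(1) by (simp_all add: hom_def)
    ultimately obtain v where v: "v \<in> hom C U P" "Comp C p1 v = v1" "Comp C p2 v = v2"
      using pullback_univ[OF pb _ _ _ C] by metis
    then show "\<exists>v. v \<in> hom C U P \<and> is_restr C S d (\<lambda>n y. Comp C (cSX n y) p1) v \<and>
        is_restr C (Simp T) dY (\<lambda>n y. Comp C (cTY n y) p2) v"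
      using v1(2) v2(2) cat_assoc[OF C v(1) p1 cSX] cat_assoc[OF C v(1) p2 cTY]
      unfolding is_restr_def by auto
  next
    fix U v w assume v: "v \<in> hom C U P" and w: "w \<in> hom C U P"
      and eX: "\<And>n y. y \<in> S n \<Longrightarrow> Comp C (Comp C (cSX n y) p1) v = Comp C (Comp C (cSX n y) p1) w"
      and eY: "\<And>n y. y \<in> Simp T n \<Longrightarrow> Comp C (Comp C (cTY n y) p2) v = Comp C (Comp C (cTY n y) p2) w"
    show "v = w"
    proof (rule pullback_uniq[OF C pb v w])
      show "Comp C p1 v = Comp C p1 w"
        using Map_uniq[OF C X MSX cat_comp[OF C v p1] cat_comp[OF C w p1]] eX
          cat_assoc[OF C v p1 cSX] cat_assoc[OF C w p1 cSX] by simp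
      show "Comp C p2 v = Comp C p2 w"
        using Map_uniq[OF C Y MTY cat_comp[OF C v p2] cat_comp[OF C w p2]] eY
          cat_assoc[OF C v p2 cTY] cat_assoc[OF C w p2 cTY] by simp
    qed
  qed
qed

lemma fibrationD:
  assumes "fibration C cov X Y f"
  shows "is_smorph C X Y f"
    "\<And>n i LSX cSX LSY cSY. 0 < n \<Longrightarrow> i \<le> n \<Longrightarrow>
        is_Map C (subsset (Delta n) (horn n i)) X LSX cSX \<Longrightarrow>
        is_Map C (subsset (Delta n) (horn n i)) Y LSY cSY \<Longrightarrow>
        relmap_prop C (\<lambda>u. u \<in> cov) (Delta n) (horn n i) f
          (Ob X n) (\<lambda>m \<theta>. Opm X n \<theta>) LSX cSX LSY cSY (Ob Y n) (\<lambda>m \<theta>. Opm Y n \<theta>)"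
proof -
  show "is_smorph C X Y f" using assms unfolding fibration_def by (rule conjunct1)
  have "\<forall>n i LSX cSX LSY cSY. 0 < n \<and> i \<le> n \<and>
        is_Map C (subsset (Delta n) (horn n i)) X LSX cSX \<and>
        is_Map C (subsset (Delta n) (horn n i)) Y LSY cSY \<longrightarrow>
        relmap_prop C (\<lambda>u. u \<in> cov) (Delta n) (horn n i) f
          (Ob X n) (\<lambda>m \<theta>. Opm X n \<theta>) LSX cSX LSY cSY (Ob Y n) (\<lambda>m \<theta>. Opm Y n \<theta>)"
    using assms unfolding fibration_def by (rule conjunct2)
  then show "\<And>n i LSX cSX LSY cSY. 0 < n \<Longrightarrow> i \<le> n \<Longrightarrow>
        is_Map C (subsset (Delta n) (horn n i)) X LSX cSX \<Longrightarrow>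
        is_Map C (subsset (Delta n) (horn n i)) Y LSY cSY \<Longrightarrow>
        relmap_prop C (\<lambda>u. u \<in> cov) (Delta n) (horn n i) f
          (Ob X n) (\<lambda>m \<theta>. Opm X n \<theta>) LSX cSX LSY cSY (Ob Y n) (\<lambda>m \<theta>. Opm Y n \<theta>)"
    by blast
qed

lemma relmap_propD:
  assumes "relmap_prop C Q T S f LTX cTX LSX cSX LSY cSY LTY cTY"
    "a \<in> hom C LSX LSY" "is_push C S f cSX cSY a"
    "b \<in> hom C LTY LSY" "is_restr C S cTY cSY b"
    "is_pullback C a b P p1 p2"
    "u \<in> hom C LTX P" "is_restr C S cTX cSX (Comp C p1 u)"
    "is_push C (Simp T) f cTX cTY (Comp C p2 u)"
  shows "Q u"
  using assms(1)[unfolded relmap_prop_def, rule_format, of a b P p1 p2 u] assms(2-9) by simp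

text \<open>For a fibration f of k-groupoids, X_n \<rightarrow> Map(\<Lambda>^n_i \<hookrightarrow> \<Delta>^n, f) is a cover, and an
  isomorphism for n > k: it is a cover by definition, and it is the composite of the
  isomorphisms X_n \<rightarrow> Map(\<Lambda>^n_i, X) and the inverse of the base change of Y_n \<rightarrow> Map(\<Lambda>^n_i, Y).\<close>

lemma fibration_horn_map_cover:
  assumes D: "descent_category C cov" and GX: "k_groupoid C cov k X" and GY: "k_groupoid C cov k Y"
    and fib: "fibration C cov X Y f" and n: "0 < n" "i \<le> n"
    and MHX: "is_Map C (subsset (Delta n) (horn n i)) X LHX cHX"
    and MHY: "is_Map C (subsset (Delta n) (horn n i)) Y LHY cHY"
    and rX: "rX \<in> hom C (Ob X n) LHX" "is_restr C (horn n i) (\<lambda>m \<theta>. Opm X n \<theta>) cHX rX"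
    and bH: "bH \<in> hom C (Ob Y n) LHY" "is_restr C (horn n i) (\<lambda>m \<theta>. Opm Y n \<theta>) cHY bH"
    and aH: "aH \<in> hom C LHX LHY" "is_push C (horn n i) f cHX cHY aH"
    and pb: "is_pullback C aH bH R q1 q2"
    and hX: "hX \<in> hom C (Ob X n) R" "Comp C q1 hX = rX" "Comp C q2 hX = f n"
  shows "hX \<in> cov \<and> (k < n \<longrightarrow> is_iso C hX)"
proof
  have C: "is_category C" using descent_categoryD(1)[OF D] .
  have "is_push C (Simp (Delta n)) f (\<lambda>m \<theta>. Opm X n \<theta>) (\<lambda>m \<theta>. Opm Y n \<theta>) (Comp C q2 hX)"
    using smorphD(4)[OF fibrationD(1)[OF fib]] hX(3) unfolding is_push_def by (simp add: Delta_def)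
  then show "hX \<in> cov"
    using relmap_propD[OF fibrationD(2)[OF fib n MHX MHY] aH bH pb hX(1)] rX(2) hX(2) by simp
  show "k < n \<longrightarrow> is_iso C hX"
  proof
    assume "k < n"
    then have "is_iso C rX" "is_iso C bH"
      using k_groupoidD(2)[OF GX n MHX rX] k_groupoidD(2)[OF GY n MHY bH] by simp_all
    then have "is_iso C q1" using pullback_iso[OF C pullback_sym[OF C pb]] by simp
    moreover have "q1 \<in> hom C R LHX" using pullbackD(2)[OF pb] aH(1) by (simp add: hom_def)
    ultimately show "is_iso C hX"
      using iso_cancel_left[OF C hX(1)] hX(2) \<open>is_iso C rX\<close> by blast
  qed
qed

lemma fibration_horn_relMap:
  assumes D: "descent_category C cov" and GX: "k_groupoid C cov k X" and GY: "k_groupoid C cov k Y"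
    and fib: "fibration C cov X Y f" and n: "0 < n" "i \<le> n"
  obtains R eR eYR hX where "is_relMap C (Delta n) X Y f (horn n i) R eR eYR"
    "hX \<in> hom C (Ob X n) R" "is_restr C (horn n i) (\<lambda>m \<theta>. Opm X n \<theta>) eR hX"
    "is_restr C (Simp (Delta n)) (\<lambda>m \<theta>. Comp C (f m) (Opm X n \<theta>)) eYR hX"
    "hX \<in> cov \<and> (k < n \<longrightarrow> is_iso C hX)"
proof -
  have C: "is_category C" and L: "has_finite_limits C" using descent_categoryD(1,2)[OF D] .
  have fs: "is_smorph C X Y f" using fibrationD(1)[OF fib] .
  note X = smorphD(1)[OF fs] and Y = smorphD(2)[OF fs]
  obtain LHX cHX rX where MHX: "is_Map C (subsset (Delta n) (horn n i)) X LHX cHX"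
    and rX: "rX \<in> hom C (Ob X n) LHX" "is_restr C (horn n i) (\<lambda>m \<theta>. Opm X n \<theta>) cHX rX"
    using horn_restriction_exists[OF C L X] .
  obtain LHY cHY bH where MHY: "is_Map C (subsset (Delta n) (horn n i)) Y LHY cHY"
    and bH: "bH \<in> hom C (Ob Y n) LHY" "is_restr C (horn n i) (\<lambda>m \<theta>. Opm Y n \<theta>) cHY bH"
    using horn_restriction_exists[OF C L Y] .
  have cHX: "\<And>m \<theta>. \<theta> \<in> horn n i m \<Longrightarrow> cHX m \<theta> \<in> hom C LHX (Ob X m)"
    and cHY: "\<And>m \<theta>. \<theta> \<in> horn n i m \<Longrightarrow> cHY m \<theta> \<in> hom C LHY (Ob Y m)"
    using sconeD(2)[OF MapD(1)[OF MHX]] sconeD(2)[OF MapD(1)[OF MHY]] by simp_all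
  obtain aH where aH: "aH \<in> hom C LHX LHY" "is_restr C (horn n i) (\<lambda>m \<theta>. Comp C (f m) (cHX m \<theta>)) cHY aH"
    using Map_subcomplex_restrE[OF MHY push_scone[OF C fs MapD(1)[OF MHX]]] .
  have aH': "is_push C (horn n i) f cHX cHY aH" using aH(2) unfolding is_restr_def is_push_def by simp
  obtain R q1 q2 where pb: "is_pullback C aH bH R q1 q2"
    using pullback_exists[OF C L aH(1) bH(1)] .
  have R: "is_relMap C (Delta n) X Y f (horn n i) R (\<lambda>m \<theta>. Comp C (cHX m \<theta>) q1)
      (\<lambda>m \<theta>. Comp C (Opm Y n \<theta>) q2)"
    by (rule relMap_pullback[OF C fs horn_subcomplex MHX MHY Map_Delta[OF C Y] aH(1) aH' bH pb])
  have q: "q1 \<in> hom C R LHX" "q2 \<in> hom C R (Ob Y n)"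
    using pullbackD(2,3)[OF pb] aH(1) bH(1) by (auto simp: hom_def)
  have "Comp C aH rX = Comp C bH (f n)"
  proof (rule Map_uniq[OF C Y MHY cat_comp[OF C rX(1) aH(1)] cat_comp[OF C smorphD(3)[OF fs] bH(1)]])
    fix m \<theta> assume "\<theta> \<in> Simp (subsset (Delta n) (horn n i)) m"
    then have t: "\<theta> \<in> horn n i m" "simp_op m n \<theta>" by (simp_all add: horn_def)
    have "Comp C (cHY m \<theta>) (Comp C aH rX) = Comp C (f m) (Opm X n \<theta>)"
      using cat_assoc[OF C rX(1) aH(1) cHY[OF t(1)]] cat_assoc[OF C rX(1) cHX[OF t(1)] smorphD(3)[OF fs]]
        aH(2) rX(2) t(1) unfolding is_restr_def by simp
    also have "\<dots> = Comp C (cHY m \<theta>) (Comp C bH (f n))"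
      using smorphD(4)[OF fs t(2)] cat_assoc[OF C smorphD(3)[OF fs] bH(1) cHY[OF t(1)]] bH(2) t(1)
      unfolding is_restr_def by simp
    finally show "Comp C (cHY m \<theta>) (Comp C aH rX) = Comp C (cHY m \<theta>) (Comp C bH (f n))" .
  qed
  moreover have "rX \<in> hom C (Ob X n) (Dom C aH)" "f n \<in> hom C (Ob X n) (Dom C bH)"
    using rX(1) aH(1) bH(1) smorphD(3)[OF fs] by (simp_all add: hom_def)
  ultimately obtain hX where hX: "hX \<in> hom C (Ob X n) R" "Comp C q1 hX = rX" "Comp C q2 hX = f n"
    using pullback_univ[OF pb _ _ _ C] by metis
  have "is_restr C (horn n i) (\<lambda>m \<theta>. Opm X n \<theta>) (\<lambda>m \<theta>. Comp C (cHX m \<theta>) q1) hX"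
    using rX(2) hX(2) cat_assoc[OF C hX(1) q(1) cHX] unfolding is_restr_def by simp
  moreover have "is_restr C (Simp (Delta n)) (\<lambda>m \<theta>. Comp C (f m) (Opm X n \<theta>))
      (\<lambda>m \<theta>. Comp C (Opm Y n \<theta>) q2) hX"
    using hX(3) cat_assoc[OF C hX(1) q(2) sobjD(2)[OF Y]] smorphD(4)[OF fs]
    unfolding is_restr_def by (simp add: Delta_def)
  ultimately show ?thesis
    using that R hX(1) fibration_horn_map_cover[OF D GX GY fib n MHX MHY rX bH aH(1) aH' pb hX] by blast
qed

lemma relMap_restrictions_agree:
  assumes C: "is_category C" and fs: "is_smorph C X Y f" and T: "is_sset T"
    and hp: "horn_pushout T F F' n i x"
    and RH: "is_relMap C (Delta n) X Y f (horn n i) R eR eYR"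
    and hX: "hX \<in> hom C (Ob X n) R" "is_restr C (horn n i) (\<lambda>m \<theta>. Opm X n \<theta>) eR hX"
      "is_restr C (Simp (Delta n)) (\<lambda>m \<theta>. Comp C (f m) (Opm X n \<theta>)) eYR hX"
    and r: "r \<in> hom C M R" "is_restr C (horn n i) (\<lambda>m \<theta>. e m (Act T n \<theta> x)) eR r"
      "is_restr C (Simp (Delta n)) (\<lambda>m \<theta>. eY m (Act T n \<theta> x)) eYR r"
    and d: "is_scone C (subsset T F') X U d" and cp: "compatible_over C f F' d dY"
    and v: "v \<in> hom C U M" "is_restr C F d e v" "is_restr C (Simp T) dY eY v"
  shows "Comp C hX (d n x) = Comp C r v"
proof -
  note X = smorphD(1)[OF fs]
  have xF': "x \<in> F' n" using horn_pushout_simplex[OF T hp] .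
  have g: "d n x \<in> hom C U (Ob X n)" using sconeD(2)[OF d, of x n] xF' by simp
  have dact: "Comp C (Opm X n \<theta>) (d n x) = d m (Act T n \<theta> x)" if "simp_op m n \<theta>" for m \<theta>
    using sconeD(3)[OF d that, of x] xF' by simp
  show ?thesis
  proof (rule relMap_uniq[OF C fs RH cat_comp[OF C g hX(1)] cat_comp[OF C v(1) r(1)]])
    fix m \<theta> assume t: "\<theta> \<in> horn n i m"
    have eR: "eR m \<theta> \<in> hom C R (Ob X m)" using sconeD(2)[OF is_relMapD(1)[OF RH], of \<theta> m] t by simp
    have "Comp C (eR m \<theta>) (Comp C hX (d n x)) = d m (Act T n \<theta> x)"
      using cat_assoc[OF C g hX(1) eR] hX(2) t dact[of m \<theta>] unfolding is_restr_def horn_def by simp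
    also have "\<dots> = Comp C (eR m \<theta>) (Comp C r v)"
      using cat_assoc[OF C v(1) r(1) eR] r(2) v(2) t horn_pushoutD(2)[OF hp t]
      unfolding is_restr_def by simp
    finally show "Comp C (eR m \<theta>) (Comp C hX (d n x)) = Comp C (eR m \<theta>) (Comp C r v)" .
  next
    fix m \<theta> assume "\<theta> \<in> Simp (Delta n) m"
    then have t: "simp_op m n \<theta>" by (simp add: Delta_def)
    have eYR: "eYR m \<theta> \<in> hom C R (Ob Y m)"
      using sconeD(2)[OF is_relMapD(2)[OF RH], of \<theta> m] t by (simp add: Delta_def)
    have y: "Act T n \<theta> x \<in> F' m" "Act T n \<theta> x \<in> Simp T m"
      using horn_pushoutD(3)[OF hp, of m] t ssetD(1)[OF T t horn_pushoutD(1)[OF hp]] by auto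
    have "Comp C (eYR m \<theta>) (Comp C hX (d n x)) = Comp C (f m) (Comp C (Opm X n \<theta>) (d n x))"
      using cat_assoc[OF C g hX(1) eYR] hX(3) t cat_assoc[OF C g sobjD(2)[OF X t] smorphD(3)[OF fs]]
      unfolding is_restr_def by (simp add: Delta_def)
    also have "\<dots> = dY m (Act T n \<theta> x)"
      using dact[OF t] cp y(1) unfolding compatible_over_def by simp
    also have "\<dots> = Comp C (eYR m \<theta>) (Comp C r v)"
      using cat_assoc[OF C v(1) r(1) eYR] r(3) v(3) t y(2) unfolding is_restr_def by (simp add: Delta_def)
    finally show "Comp C (eYR m \<theta>) (Comp C hX (d n x)) = Comp C (eYR m \<theta>) (Comp C r v)" .
  qed
qed

lemma glue_compatible_over:
  assumes C: "is_category C" and fs: "is_smorph C X Y f"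
    and hp: "horn_pushout T F F' n i x"
    and e: "is_scone C (subsset T F) X M e" and cp: "compatible_over C f F e eY"
    and p1: "p1 \<in> hom C P (Ob X n)" and p2: "p2 \<in> hom C P M"
    and hgY: "is_restr C (Simp (Delta n)) (\<lambda>m \<theta>. Comp C (eY m (Act T n \<theta> x)) p2)
      (\<lambda>m \<theta>. Comp C (f m) (Opm X n \<theta>)) p1"
  shows "compatible_over C f F' (glue C X T F n i x (\<lambda>m y. Comp C (e m y) p2) p1)
    (\<lambda>m y. Comp C (eY m y) p2)"
  unfolding compatible_over_def
proof (intro allI ballI)
  fix m y assume y: "y \<in> F' m"
  show "Comp C (f m) (glue C X T F n i x (\<lambda>m y. Comp C (e m y) p2) p1 m y) = Comp C (eY m y) p2"
  proof (cases "y \<in> F m")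
    case True
    then show ?thesis
      using cat_assoc[OF C p2 sconeD(2)[OF e] smorphD(3)[OF fs], of y m] cp
      unfolding compatible_over_def by (simp add: glue_in_F)
  next
    case False
    note \<theta> = preimage_op[OF hp y False]
    have "Comp C (f m) (Comp C (Opm X n (preimage_op T n i x m y)) p1)
        = Comp C (eY m (Act T n (preimage_op T n i x m y) x)) p2"
      using cat_assoc[OF C p1 sobjD(2)[OF smorphD(1)[OF fs] \<theta>(1)] smorphD(3)[OF fs]] hgY \<theta>(1)
      unfolding is_restr_def by (simp add: Delta_def)
    then show ?thesis using \<theta>(2) False by (simp add: glue_off_F)
  qed
qed

lemma relMap_horn_pushout:
  assumes C: "is_category C" and fs: "is_smorph C X Y f" and T: "is_sset T"
    and F: "is_subcomplex T F" and hp: "horn_pushout T F F' n i x"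
    and RF: "is_relMap C T X Y f F M e eY"
    and RH: "is_relMap C (Delta n) X Y f (horn n i) R eR eYR"
    and hX: "hX \<in> hom C (Ob X n) R" "is_restr C (horn n i) (\<lambda>m \<theta>. Opm X n \<theta>) eR hX"
      "is_restr C (Simp (Delta n)) (\<lambda>m \<theta>. Comp C (f m) (Opm X n \<theta>)) eYR hX"
    and r: "r \<in> hom C M R" "is_restr C (horn n i) (\<lambda>m \<theta>. e m (Act T n \<theta> x)) eR r"
      "is_restr C (Simp (Delta n)) (\<lambda>m \<theta>. eY m (Act T n \<theta> x)) eYR r"
    and pb: "is_pullback C hX r P p1 p2"
  shows "is_relMap C T X Y f F' P (glue C X T F n i x (\<lambda>m y. Comp C (e m y) p2) p1)
    (\<lambda>m y. Comp C (eY m y) p2)"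
proof -
  note X = smorphD(1)[OF fs] and Y = smorphD(2)[OF fs]
  let ?e' = "glue C X T F n i x (\<lambda>m y. Comp C (e m y) p2) p1"
  have p1: "p1 \<in> hom C P (Ob X n)" and p2: "p2 \<in> hom C P M"
    using pullbackD(2,3)[OF pb] hX(1) r(1) by (auto simp: hom_def)
  have eR: "\<And>m \<theta>. \<theta> \<in> horn n i m \<Longrightarrow> eR m \<theta> \<in> hom C R (Ob X m)"
    and eYR: "\<And>m \<theta>. \<theta> \<in> Simp (Delta n) m \<Longrightarrow> eYR m \<theta> \<in> hom C R (Ob Y m)"
    using sconeD(2)[OF is_relMapD(1)[OF RH]] sconeD(2)[OF is_relMapD(2)[OF RH]] by simp_all
  have e: "\<And>m y. y \<in> F m \<Longrightarrow> e m y \<in> hom C M (Ob X m)"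
    and eY: "\<And>m y. y \<in> Simp T m \<Longrightarrow> eY m y \<in> hom C M (Ob Y m)"
    using sconeD(2)[OF is_relMapD(1)[OF RF]] sconeD(2)[OF is_relMapD(2)[OF RF]] by simp_all
  note sq = pullbackD(4)[OF pb]
  have hg: "is_restr C (horn n i) (\<lambda>m \<theta>. Comp C (e m (Act T n \<theta> x)) p2) (\<lambda>m \<theta>. Opm X n \<theta>) p1"
    using is_restr_square[OF C eR hX(1) r(1) p1 p2 sq hX(2) r(2)] .
  have FF': "\<And>m. F m \<subseteq> F' m" using horn_pushout_mono[OF hp] .
  show ?thesis
  proof (rule is_relMapI)
    show "is_scone C (subsset T F') X P ?e'"
      by (rule glue_scone[OF C X T F hp scone_comp[OF C X is_relMapD(1)[OF RF] p2] p1 hg])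
    show "is_scone C T Y P (\<lambda>m y. Comp C (eY m y) p2)"
      by (rule scone_comp[OF C Y is_relMapD(2)[OF RF] p2])
    show "compatible_over C f F' ?e' (\<lambda>m y. Comp C (eY m y) p2)"
      using glue_compatible_over[OF C fs hp is_relMapD(1,3)[OF RF] p1 p2
          is_restr_square[OF C eYR hX(1) r(1) p1 p2 sq hX(3) r(3)]] .
  next
    fix U d dY assume d: "is_scone C (subsset T F') X U d" and dY: "is_scone C T Y U dY"
      and cp: "compatible_over C f F' d dY"
    have "compatible_over C f F d dY" using cp FF' unfolding compatible_over_def by blast
    then obtain v1 where v1: "v1 \<in> hom C U M" "is_restr C F d e v1" "is_restr C (Simp T) dY eY v1"
      using is_relMapE[OF RF scone_mono[OF d F FF'] dY] by blast
    have "d n x \<in> hom C U (Dom C hX)" "v1 \<in> hom C U (Dom C r)"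
      using sconeD(2)[OF d, of x n] horn_pushout_simplex[OF T hp] v1(1) hX(1) r(1)
      by (simp_all add: hom_def)
    then obtain v where v: "v \<in> hom C U P" "Comp C p1 v = d n x" "Comp C p2 v = v1"
      using pullback_univ[OF pb _ _ relMap_restrictions_agree[OF C fs T hp RH hX r d cp v1] C]
      by blast
    have "is_restr C F' d ?e' v"
      using glue_factor[OF C X T hp p1 v(1) d v(2)] cat_assoc[OF C v(1) p2 e] v(3) v1(2)
      unfolding is_restr_def by simp
    moreover have "is_restr C (Simp T) dY (\<lambda>m y. Comp C (eY m y) p2) v"
      using cat_assoc[OF C v(1) p2 eY] v(3) v1(3) unfolding is_restr_def by simp
    ultimately show "\<exists>v. v \<in> hom C U P \<and> is_restr C F' d ?e' v \<and>
        is_restr C (Simp T) dY (\<lambda>m y. Comp C (eY m y) p2) v"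
      using v(1) by blast
  next
    fix U v w assume v: "v \<in> hom C U P" and w: "w \<in> hom C U P"
      and eX: "\<And>m y. y \<in> F' m \<Longrightarrow> Comp C (?e' m y) v = Comp C (?e' m y) w"
      and eY': "\<And>m y. y \<in> Simp T m \<Longrightarrow>
        Comp C (Comp C (eY m y) p2) v = Comp C (Comp C (eY m y) p2) w"
    show "v = w"
    proof (rule pullback_uniq[OF C pb v w])
      show "Comp C p1 v = Comp C p1 w"
        using eX[of x n] glue_simplex[OF C X T hp p1 hg] horn_pushout_simplex[OF T hp] by simp
      show "Comp C p2 v = Comp C p2 w"
      proof (rule relMap_uniq[OF C fs RF cat_comp[OF C v p2] cat_comp[OF C w p2]])
        fix m y assume y: "y \<in> F m"
        then show "Comp C (e m y) (Comp C p2 v) = Comp C (e m y) (Comp C p2 w)"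
          using eX[of y m] FF' cat_assoc[OF C v p2 e[OF y]] cat_assoc[OF C w p2 e[OF y]]
          by (auto simp: glue_in_F)
      next
        fix m y assume y: "y \<in> Simp T m"
        then show "Comp C (eY m y) (Comp C p2 v) = Comp C (eY m y) (Comp C p2 w)"
          using eY'[OF y] cat_assoc[OF C v p2 eY[OF y]] cat_assoc[OF C w p2 eY[OF y]] by simp
      qed
    qed
  qed
qed

lemma relMap_horn_pushout_restr:
  assumes D: "descent_category C cov" and GX: "k_groupoid C cov k X" and GY: "k_groupoid C cov k Y"
    and fib: "fibration C cov X Y f" and T: "is_sset T" and F: "is_subcomplex T F"
    and hp: "horn_pushout T F F' n i x" and n: "0 < n" "i \<le> n"
    and RF: "is_relMap C T X Y f F M e eY"
  obtains P e' eY' q where "is_relMap C T X Y f F' P e' eY'" "q \<in> hom C P M"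
    "is_restr C F e' e q" "is_restr C (Simp T) eY' eY q" "q \<in> cov \<and> (k < n \<longrightarrow> is_iso C q)"
proof -
  have C: "is_category C" and L: "has_finite_limits C" using descent_categoryD(1,2)[OF D] .
  have fs: "is_smorph C X Y f" using fibrationD(1)[OF fib] .
  note x = horn_pushoutD(1)[OF hp]
  obtain R eR eYR hX where RH: "is_relMap C (Delta n) X Y f (horn n i) R eR eYR"
    and hX: "hX \<in> hom C (Ob X n) R" "is_restr C (horn n i) (\<lambda>m \<theta>. Opm X n \<theta>) eR hX"
      "is_restr C (Simp (Delta n)) (\<lambda>m \<theta>. Comp C (f m) (Opm X n \<theta>)) eYR hX"
    and good: "hX \<in> cov \<and> (k < n \<longrightarrow> is_iso C hX)"
    using fibration_horn_relMap[OF D GX GY fib n] .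
  have "is_scone C (subsset (Delta n) (horn n i)) X M (\<lambda>m \<theta>. e m (Act T n \<theta> x))"
    by (rule scone_along_simplex[OF T is_relMapD(1)[OF RF] x horn_subcomplex horn_pushoutD(2)[OF hp]])
  moreover have "is_scone C (Delta n) Y M (\<lambda>m \<theta>. eY m (Act T n \<theta> x))"
  proof -
    have eYT: "is_scone C (subsset T (Simp T)) Y M eY" using is_relMapD(2)[OF RF] by simp
    have "is_scone C (subsset (Delta n) (Simp (Delta n))) Y M (\<lambda>m \<theta>. eY m (Act T n \<theta> x))"
      by (rule scone_along_simplex[OF T eYT x subcomplex_Delta_all])
        (use ssetD(1)[OF T _ x] in \<open>simp add: Delta_def\<close>)
    then show ?thesis by simp
  qed
  moreover have "compatible_over C f (horn n i) (\<lambda>m \<theta>. e m (Act T n \<theta> x)) (\<lambda>m \<theta>. eY m (Act T n \<theta> x))"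
    using is_relMapD(3)[OF RF] horn_pushoutD(2)[OF hp] unfolding compatible_over_def by simp
  ultimately obtain r where r: "r \<in> hom C M R"
    "is_restr C (horn n i) (\<lambda>m \<theta>. e m (Act T n \<theta> x)) eR r"
    "is_restr C (Simp (Delta n)) (\<lambda>m \<theta>. eY m (Act T n \<theta> x)) eYR r"
    using is_relMapE[OF RH] by metis
  obtain P p1 p2 where pb: "is_pullback C hX r P p1 p2"
    using pullback_exists[OF C L hX(1) r(1)] .
  have p2: "p2 \<in> hom C P M" using pullbackD(3)[OF pb] r(1) by (simp add: hom_def)
  have "is_restr C F (glue C X T F n i x (\<lambda>m y. Comp C (e m y) p2) p1) e p2"
    "is_restr C (Simp T) (\<lambda>m y. Comp C (eY m y) p2) eY p2"
    unfolding is_restr_def by (simp_all add: glue_in_F)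
  moreover have "p2 \<in> cov \<and> (k < n \<longrightarrow> is_iso C p2)"
    using descent_categoryD(5)[OF D _ pb] pullback_iso[OF C pb] good by blast
  ultimately show ?thesis
    using that relMap_horn_pushout[OF C fs T F hp RF RH hX r pb] p2 by blast
qed

lemma relMap_filtration_restr:
  assumes D: "descent_category C cov" and GX: "k_groupoid C cov k X" and GY: "k_groupoid C cov k Y"
    and fib: "fibration C cov X Y f" and T: "is_sset T" and filt: "horn_filtration T m N F nn ii xs"
    and R0: "is_relMap C T X Y f (F 0) P0 e0 eY0" and l: "l \<le> N"
  shows "\<exists>M e eY q. is_relMap C T X Y f (F l) M e eY \<and> q \<in> hom C M P0 \<and>
    is_restr C (F 0) e e0 q \<and> is_restr C (Simp T) eY eY0 q \<and> q \<in> cov \<and> (k < m \<longrightarrow> is_iso C q)"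
  using l
proof (induction l)
  case 0
  have C: "is_category C" using descent_categoryD(1)[OF D] .
  have P0: "P0 \<in> Obj C" using sconeD(1)[OF is_relMapD(1)[OF R0]] .
  have "is_restr C (F 0) e0 e0 (Idm C P0)" "is_restr C (Simp T) eY0 eY0 (Idm C P0)"
    using cat_idr[OF C sconeD(2)[OF is_relMapD(1)[OF R0]]] cat_idr[OF C sconeD(2)[OF is_relMapD(2)[OF R0]]]
    unfolding is_restr_def by simp_all
  then show ?case using R0 cat_id[OF C P0] cover_iso_id[OF D P0] by blast
next
  case (Suc l)
  have C: "is_category C" using descent_categoryD(1)[OF D] .
  obtain M e eY q where IH: "is_relMap C T X Y f (F l) M e eY" "q \<in> hom C M P0"
    "is_restr C (F 0) e e0 q" "is_restr C (Simp T) eY eY0 q" "q \<in> cov \<and> (k < m \<longrightarrow> is_iso C q)"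
    using Suc by auto
  have lN: "l < N" using Suc.prems by simp
  note step = horn_filtrationD[OF filt lN]
  obtain P e' eY' q' where P: "is_relMap C T X Y f (F (Suc l)) P e' eY'" "q' \<in> hom C P M"
    "is_restr C (F l) e' e q'" "is_restr C (Simp T) eY' eY q'" "q' \<in> cov \<and> (k < nn l \<longrightarrow> is_iso C q')"
    by (rule relMap_horn_pushout_restr[OF D GX GY fib T step(1,5,2,4) IH(1)])
  have "is_restr C (F 0) e' e0 (Comp C q q')"
    using is_restr_trans[OF C horn_filtration_mono[OF filt] IH(2) P(2)
        sconeD(2)[OF is_relMapD(1)[OF R0]] IH(3) P(3)] lN by simp
  moreover have "is_restr C (Simp T) eY' eY0 (Comp C q q')"
    using is_restr_trans[OF C _ IH(2) P(2) sconeD(2)[OF is_relMapD(2)[OF R0]] IH(4) P(4)] by simp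
  moreover have "Comp C q q' \<in> cov \<and> (k < m \<longrightarrow> is_iso C (Comp C q q'))"
    using cover_iso_comp[OF D P(2) IH(2)] P(5) IH(5) step(3) by auto
  ultimately show ?case using P(1) cat_comp[OF C P(2) IH(2)] by blast
qed

lemma relMap_Simp_iso_Map:
  assumes C: "is_category C" and fs: "is_smorph C X Y f"
    and R: "is_relMap C T X Y f (Simp T) M e eY" and MTX: "is_Map C T X LTX cTX"
  obtains w where "w \<in> hom C LTX M" "is_restr C (Simp T) cTX e w"
    "is_restr C (Simp T) (\<lambda>m y. Comp C (f m) (cTX m y)) eY w" "is_iso C w"
proof -
  note X = smorphD(1)[OF fs]
  have cTX: "\<And>j y. y \<in> Simp T j \<Longrightarrow> cTX j y \<in> hom C LTX (Ob X j)"
    using sconeD(2)[OF MapD(1)[OF MTX]] .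
  have e: "\<And>j y. y \<in> Simp T j \<Longrightarrow> e j y \<in> hom C M (Ob X j)"
    and eY: "\<And>j y. y \<in> Simp T j \<Longrightarrow> eY j y \<in> hom C M (Ob Y j)"
    using sconeD(2)[OF is_relMapD(1)[OF R]] sconeD(2)[OF is_relMapD(2)[OF R]] by simp_all
  have "compatible_over C f (Simp T) cTX (\<lambda>m y. Comp C (f m) (cTX m y))"
    unfolding compatible_over_def by simp
  moreover have "is_scone C (subsset T (Simp T)) X LTX cTX" using MapD(1)[OF MTX] by simp
  ultimately obtain w where w: "w \<in> hom C LTX M" "is_restr C (Simp T) cTX e w"
    "is_restr C (Simp T) (\<lambda>m y. Comp C (f m) (cTX m y)) eY w"
    using is_relMapE[OF R _ push_scone[OF C fs MapD(1)[OF MTX]]] by blast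
  have "is_scone C T X M e" using is_relMapD(1)[OF R] by simp
  then obtain w' where w': "w' \<in> hom C M LTX" "is_restr C (Simp T) e cTX w'"
    by (rule Map_restrE[OF MTX])
  have LTX: "LTX \<in> Obj C" and Mo: "M \<in> Obj C" using cat_obj[OF C w(1)] by auto
  have "Comp C w' w = Idm C LTX"
    using Map_uniq[OF C X MTX cat_comp[OF C w(1) w'(1)] cat_id[OF C LTX]]
      cat_assoc[OF C w(1) w'(1) cTX] cat_idr[OF C cTX] w(2) w'(2) unfolding is_restr_def by simp
  moreover have "Comp C w w' = Idm C M"
  proof (rule relMap_uniq[OF C fs R cat_comp[OF C w'(1) w(1)] cat_id[OF C Mo]])
    fix j y assume y: "y \<in> Simp T j"
    show "Comp C (e j y) (Comp C w w') = Comp C (e j y) (Idm C M)"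
      using cat_assoc[OF C w'(1) w(1) e[OF y]] w(2) w'(2) cat_idr[OF C e[OF y]] y
      unfolding is_restr_def by simp
    have "Comp C (eY j y) (Comp C w w') = Comp C (f j) (Comp C (cTX j y) w')"
      using cat_assoc[OF C w'(1) w(1) eY[OF y]] cat_assoc[OF C w'(1) cTX[OF y] smorphD(3)[OF fs]]
        w(3) y unfolding is_restr_def by simp
    also have "\<dots> = eY j y" using w'(2) y is_relMapD(3)[OF R] unfolding is_restr_def compatible_over_def by simp
    finally show "Comp C (eY j y) (Comp C w w') = Comp C (eY j y) (Idm C M)"
      using cat_idr[OF C eY[OF y]] by simp
  qed
  ultimately show ?thesis using that w isoI[OF w(1) w'(1)] by blast
qed

lemma relMap_expansion_cover:
  assumes D: "descent_category C cov" and T: "is_sset T" and E: "m_expansion T m S"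
    and GX: "k_groupoid C cov k X" and GY: "k_groupoid C cov k Y" and fib: "fibration C cov X Y f"
    and MTX: "is_Map C T X LTX cTX" and MSX: "is_Map C (subsset T S) X LSX cSX"
    and MSY: "is_Map C (subsset T S) Y LSY cSY" and MTY: "is_Map C T Y LTY cTY"
  shows "relmap_prop C (\<lambda>u. u \<in> cov \<and> (k < m \<longrightarrow> is_iso C u)) T S f
    LTX cTX LSX cSX LSY cSY LTY cTY"
  unfolding relmap_prop_def
proof (intro allI impI, elim conjE)
  fix a b P0 p1 p2 u
  assume a: "a \<in> hom C LSX LSY" "is_push C S f cSX cSY a"
    and b: "b \<in> hom C LTY LSY" "is_restr C S cTY cSY b"
    and pb: "is_pullback C a b P0 p1 p2" and u: "u \<in> hom C LTX P0"
    and u1: "is_restr C S cTX cSX (Comp C p1 u)" and u2: "is_push C (Simp T) f cTX cTY (Comp C p2 u)"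
  have C: "is_category C" using descent_categoryD(1)[OF D] .
  have fs: "is_smorph C X Y f" using fibrationD(1)[OF fib] .
  have p: "p1 \<in> hom C P0 LSX" "p2 \<in> hom C P0 LTY"
    using pullbackD(2,3)[OF pb] a(1) b(1) by (auto simp: hom_def)
  let ?e0 = "\<lambda>n y. Comp C (cSX n y) p1" and ?eY0 = "\<lambda>n y. Comp C (cTY n y) p2"
  have R0: "is_relMap C T X Y f S P0 ?e0 ?eY0"
    by (rule relMap_pullback[OF C fs m_expansion_subcomplex[OF E] MSX MSY MTY a b pb])
  obtain N F nn ii xs where F0: "F 0 = S" and FN: "F N = Simp T"
    and filt: "horn_filtration T m N F nn ii xs"
    using m_expansionE[OF E] .
  obtain M e eY q where R: "is_relMap C T X Y f (Simp T) M e eY" and q: "q \<in> hom C M P0"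
    "is_restr C S e ?e0 q" "is_restr C (Simp T) eY ?eY0 q" "q \<in> cov \<and> (k < m \<longrightarrow> is_iso C q)"
    using relMap_filtration_restr[OF D GX GY fib T filt, of P0 ?e0 ?eY0 N] R0 F0 FN by auto
  obtain w where w: "w \<in> hom C LTX M" "is_restr C (Simp T) cTX e w"
    "is_restr C (Simp T) (\<lambda>m y. Comp C (f m) (cTX m y)) eY w" "is_iso C w"
    by (rule relMap_Simp_iso_Map[OF C fs R MTX])
  have "u = Comp C q w"
  proof (rule relMap_uniq[OF C fs R0 u cat_comp[OF C w(1) q(1)]])
    fix j y assume y: "y \<in> S j"
    have yT: "y \<in> Simp T j" using subcomplexD(1)[OF m_expansion_subcomplex[OF E]] y by blast
    have "is_restr C S cTX ?e0 (Comp C q w)"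
      using is_restr_trans[OF C _ q(1) w(1) sconeD(2)[OF is_relMapD(1)[OF R0]] q(2) w(2)]
        subcomplexD(1)[OF m_expansion_subcomplex[OF E]] by simp
    moreover have "is_restr C S cTX ?e0 u"
      using u1 cat_assoc[OF C u p(1) sconeD(2)[OF MapD(1)[OF MSX]]] unfolding is_restr_def by simp
    ultimately show "Comp C (?e0 j y) u = Comp C (?e0 j y) (Comp C q w)"
      using y unfolding is_restr_def by simp
  next
    fix j y assume y: "y \<in> Simp T j"
    have "is_restr C (Simp T) (\<lambda>m y. Comp C (f m) (cTX m y)) ?eY0 (Comp C q w)"
      using is_restr_trans[OF C _ q(1) w(1) sconeD(2)[OF is_relMapD(2)[OF R0]] q(3) w(3)] by simp
    moreover have "is_restr C (Simp T) (\<lambda>m y. Comp C (f m) (cTX m y)) ?eY0 u"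
      using u2 cat_assoc[OF C u p(2) sconeD(2)[OF MapD(1)[OF MTY]]]
      unfolding is_restr_def is_push_def by simp
    ultimately show "Comp C (?eY0 j y) u = Comp C (?eY0 j y) (Comp C q w)"
      using y unfolding is_restr_def by simp
  qed
  then show "u \<in> cov \<and> (k < m \<longrightarrow> is_iso C u)"
    using cover_iso_comp[OF D w(1) q(1) _ q(4)] iso_cover[OF D w(1) w(4)] w(4) by simp
qed

theorem lemma3p9:
  fixes C :: "('o, 'm) category" and cov :: "'m set" and k m :: nat
    and T :: "'a sset" and S :: "nat \<Rightarrow> 'a set"
  assumes "descent_category C cov"
    and "finite_sset T"
    and "m_expansion T m S"
  shows
    "(\<forall>(X :: ('o, 'm) sobj) LT cT LS cS u.
        k_groupoid C cov k X \<and>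
        is_Map C T X LT cT \<and> is_Map C (subsset T S) X LS cS \<and>
        u \<in> hom C LT LS \<and> is_restr C S cT cS u
        \<longrightarrow> u \<in> cov \<and> (k < m \<longrightarrow> is_iso C u))
   \<and>
    (\<forall>(X :: ('o, 'm) sobj) (Y :: ('o, 'm) sobj) f LTX cTX LSX cSX LSY cSY LTY cTY.
        k_groupoid C cov k X \<and> k_groupoid C cov k Y \<and> fibration C cov X Y f \<and>
        is_Map C T X LTX cTX \<and> is_Map C (subsset T S) X LSX cSX \<and>
        is_Map C (subsset T S) Y LSY cSY \<and> is_Map C T Y LTY cTY
        \<longrightarrow> relmap_prop C (\<lambda>u. u \<in> cov \<and> (k < m \<longrightarrow> is_iso C u)) T S f
              LTX cTX LSX cSX LSY cSY LTY cTY)"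
proof -
  have T: "is_sset T" using assms(2) unfolding finite_sset_def by (rule conjunct1)
  show ?thesis
    using restr_Map_expansion_cover[OF assms(1) T assms(3)]
      relMap_expansion_cover[OF assms(1) T assms(3)] by blast
qed

end
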